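(* A Sturmian sequence in $\{H,V\}$ is symmetric if and only if it is the cutting sequence of a uniformly distributed geodesic on the square torus passing through a Weierstrass point of the torus. Furthermore: (i) even symmetric Sturmian sequences correspond to geodesics passing through the center point $D$; (ii) almost symmetric Sturmian sequences correspond to geodesics passing through the corner point $A$; (iii) odd symmetric Sturmian sequences correspond to geodesics passing through $B$ or $C$.
   Context: The square torus $\mathbb{T}^2=\mathbb{C}/\mathbb{Z}[i]$ is represented as the unit square with top and bottom edges labeled $V$ and left and right edges labeled $H$. Geodesics have positive slope and are traversed North-East; the cutting sequence of a biinfinite geodesic is the biinfinite sequence of labels of edges crossed, where passing through the corner records two symbols $HV$ or $VH$. A geodesic is uniformly distributed when its slope is irrational. A Sturmian sequence is a biinfinite sequence over two letters that is not eventually periodic and has exactly $n+1$ distinct subwords of each length $n$. The Weierstrass points (fixed points of the $180^\circ$ rotation $\iota$ of the square about its center) are: $A$ the corner, $B$ the midpoint of the horizontal edge $V$, $C$ the midpoint of the vertical edge $H$, and $D$ the center of the square. A sequence $\epsilon$ is odd symmetric if there is $N$ with $\epsilon_{N+k}=\epsilon_{N-k}$ for all $k\ge0$; even symmetric if there is $N$ with $\epsilon_{N+k}=\epsilon_{N-k-1}$ for all $k\ge0$; almost symmetric if there is $N$ with $\epsilon_{N+k}=\epsilon_{N-k-1}$ for all $k\ge1$ and $\epsilon_N\ne\epsilon_{N-1}$; symmetric if it is odd, even, or almost symmetric. *)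

theory Defs
  imports Complex_Main
begin

text \<open>Edge labels of the unit square: left/right edges are H, top/bottom edges are V.\<close>
datatype letter = H | V

type_synonym biseq = "int \<Rightarrow> letter"

text \<open>The geodesic through the point p = (p1,p2) of the plane (a lift) with slope alpha,
  traversed North-East: t \<mapsto> (p1 + t, p2 + alpha * t).
  Crossing events: at time t it crosses a vertical line x \<in> \<int> (an H edge) or a
  horizontal line y \<in> \<int> (a V edge); a corner passage gives both events at the same time.\<close>
definition crossing_events :: "real \<times> real \<Rightarrow> real \<Rightarrow> (real \<times> letter) set" where
  "crossing_events p \<alpha> =
     {(t, H) | t. fst p + t \<in> \<int>} \<union> {(t, V) | t. snd p + \<alpha> * t \<in> \<int>}"

text \<open>epsilon is (an indexing of) the cutting sequence of the geodesic: an order-preserving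
  enumeration of all crossing events by the integers; simultaneous events (corner)
  may be recorded in either order HV or VH.\<close>
definition cutting_sequence :: "real \<times> real \<Rightarrow> real \<Rightarrow> biseq \<Rightarrow> bool" where
  "cutting_sequence p \<alpha> \<epsilon> \<longleftrightarrow>
     (\<exists>\<tau> :: int \<Rightarrow> real. mono \<tau> \<and>
        bij_betw (\<lambda>i. (\<tau> i, \<epsilon> i)) UNIV (crossing_events p \<alpha>))"

definition unif_distributed :: "real \<Rightarrow> bool" where
  "unif_distributed \<alpha> \<longleftrightarrow> \<alpha> > 0 \<and> \<alpha> \<notin> \<rat>"

definition passes_through :: "real \<times> real \<Rightarrow> real \<Rightarrow> real \<times> real \<Rightarrow> bool" where
  "passes_through p \<alpha> q \<longleftrightarrow>
     (\<exists>t. fst p + t - fst q \<in> \<int> \<and> snd p + \<alpha> * t - snd q \<in> \<int>)"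

definition ptA :: "real \<times> real" where "ptA = (0, 0)"
definition ptB :: "real \<times> real" where "ptB = (1/2, 0)"
definition ptC :: "real \<times> real" where "ptC = (0, 1/2)"
definition ptD :: "real \<times> real" where "ptD = (1/2, 1/2)"

definition weierstrass_points :: "(real \<times> real) set" where
  "weierstrass_points = {ptA, ptB, ptC, ptD}"

definition subwords :: "biseq \<Rightarrow> nat \<Rightarrow> letter list set" where
  "subwords \<epsilon> n = {map (\<lambda>k. \<epsilon> (i + int k)) [0..<n] | i. True}"

definition eventually_periodic :: "biseq \<Rightarrow> bool" where
  "eventually_periodic \<epsilon> \<longleftrightarrow> (\<exists>P::int. \<exists>N::int. P > 0 \<and> (\<forall>n\<ge>N. \<epsilon> (n + P) = \<epsilon> n))"

definition sturmian :: "biseq \<Rightarrow> bool" where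
  "sturmian \<epsilon> \<longleftrightarrow> \<not> eventually_periodic \<epsilon> \<and> (\<forall>n. card (subwords \<epsilon> n) = n + 1)"

definition odd_symmetric :: "biseq \<Rightarrow> bool" where
  "odd_symmetric \<epsilon> \<longleftrightarrow> (\<exists>N. \<forall>k::nat. \<epsilon> (N + int k) = \<epsilon> (N - int k))"

definition even_symmetric :: "biseq \<Rightarrow> bool" where
  "even_symmetric \<epsilon> \<longleftrightarrow> (\<exists>N. \<forall>k::nat. \<epsilon> (N + int k) = \<epsilon> (N - int k - 1))"

definition almost_symmetric :: "biseq \<Rightarrow> bool" where
  "almost_symmetric \<epsilon> \<longleftrightarrow>
     (\<exists>N. (\<forall>k::nat. k \<ge> 1 \<longrightarrow> \<epsilon> (N + int k) = \<epsilon> (N - int k - 1)) \<and> \<epsilon> N \<noteq> \<epsilon> (N - 1))"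

definition symmetric :: "biseq \<Rightarrow> bool" where
  "symmetric \<epsilon> \<longleftrightarrow> odd_symmetric \<epsilon> \<or> even_symmetric \<epsilon> \<or> almost_symmetric \<epsilon>"

end

theory Submission
  imports Defs "HOL-Analysis.Kronecker_Approximation_Theorem"
begin

(* A Sturmian sequence is balanced: an imbalance of two between factors of equal length yields
   factors H w H and V w V with w a palindrome, and then the uniqueness of the right special factor
   of each length, combined with a reflection inside w, forces eventual periodicity. Balance gives
   an irrational frequency theta of the letter V, and the sequence is an upper or lower mechanical
   word of slope theta; exchanging H and V (reflecting the square in its diagonal) reduces to the
   upper case, which is the cutting sequence of the geodesic of slope theta / (1 - theta) through
   (-r, r).

   The half-turn about a Weierstrass point maps a geodesic through it onto itself, reversing time,
   and so reverses its cutting sequence. The centre of the reversal is a letter when the point lies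
   on exactly one edge (B, C), lies between two letters when it lies on no edge (D), and at the
   corner (A) the two letters recorded there keep their order, giving an almost symmetric sequence.
   Conversely, a reflection of a mechanical word makes ceil (n theta + r) + ceil ((c + 1 - n) theta + r)
   constant up to one index, and density of the multiples of theta modulo 1 then forces
   2 r + (c + 1) theta to be an integer: the geodesic meets a point with half-integer coordinates.
   The three symmetry types exclude each other, since two distinct centres of reflection would
   make the sequence periodic. *)

section \<open>Counting letters\<close>

lemma letter_cases: "x = H \<or> x = V"
  by (cases x) auto

definition flip :: "letter \<Rightarrow> letter" where
  "flip c = (if c = H then V else H)"

lemma flip_neq: "flip c \<noteq> c"
  by (cases c) (auto simp: flip_def)

lemma flip_flip [simp]: "flip (flip c) = c"
  by (cases c) (auto simp: flip_def)

lemma flip_HV [simp]: "flip H = V" "flip V = H"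
  by (auto simp: flip_def)

lemma flip_eq_iff: "flip a = flip b \<longleftrightarrow> a = b"
  by (metis flip_flip)

definition V_ind :: "biseq \<Rightarrow> int \<Rightarrow> int" where
  "V_ind e n = (if e n = V then 1 else 0)"

lemma V_ind_H: "e x = H \<Longrightarrow> V_ind e x = 0"
  and V_ind_V: "e x = V \<Longrightarrow> V_ind e x = 1"
  by (simp_all add: V_ind_def)

text \<open>\<open>V_prefix e n\<close> counts the letters \<open>V\<close> in \<open>e 0 \<dots> e (n - 1)\<close> for \<open>n \<ge> 0\<close>, and
  minus those in \<open>e n \<dots> e (-1)\<close> for \<open>n < 0\<close>, so that it is a discrete antiderivative of \<open>V_ind e\<close>.\<close>
definition V_prefix :: "biseq \<Rightarrow> int \<Rightarrow> int" where
  "V_prefix e n = (\<Sum>k\<in>{0..<n}. V_ind e k) - (\<Sum>k\<in>{n..<0}. V_ind e k)"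

lemma V_prefix_succ: "V_prefix e (n + 1) = V_prefix e n + V_ind e n"
proof (cases "n \<ge> 0")
  case True
  then have "{0..<n+1} = insert n {0..<n}" "{n+1..<0} = {}" "{n..<0} = {}" by auto
  then show ?thesis unfolding V_prefix_def by simp
next
  case False
  then have "{n..<0} = insert n {n+1..<0}" "{0..<n+1} = {}" "{0..<n} = {}" by auto
  then show ?thesis unfolding V_prefix_def by simp
qed

definition V_count :: "biseq \<Rightarrow> int \<Rightarrow> nat \<Rightarrow> int" where
  "V_count e i n = V_prefix e (i + int n) - V_prefix e i"

lemma V_count_0 [simp]: "V_count e i 0 = 0"
  by (simp add: V_count_def)

lemma V_count_Suc: "V_count e i (Suc n) = V_count e i n + V_ind e (i + int n)"
  unfolding V_count_def using V_prefix_succ[of e "i + int n"] by (simp add: ac_simps)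

lemma V_count_Suc_left: "V_count e i (Suc n) = V_ind e i + V_count e (i + 1) n"
  unfolding V_count_def using V_prefix_succ[of e i] by (simp add: ac_simps)

lemma V_count_Suc_Suc:
  "V_count e i (Suc (Suc n)) = V_ind e i + V_count e (i + 1) n + V_ind e (i + 1 + int n)"
  using V_count_Suc_left[of e i "Suc n"] V_count_Suc[of e "i + 1" n] by simp

lemma V_count_add: "V_count e i (a + b) = V_count e i a + V_count e (i + int a) b"
  unfolding V_count_def by (simp add: add.assoc)

lemma V_count_nonneg: "V_count e i n \<ge> 0"
  by (induction n) (auto simp: V_count_Suc V_ind_def)

lemma V_count_le: "V_count e i n \<le> int n"
  by (induction n) (auto simp: V_count_Suc V_ind_def)

lemma V_count_cong:
  "(\<And>k. k < n \<Longrightarrow> e (i + int k) = e (j + int k)) \<Longrightarrow> V_count e i n = V_count e j n"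
  by (induction n) (auto simp: V_count_Suc V_ind_def)

lemma V_count_rev:
  "(\<And>k. k < n \<Longrightarrow> e (i + int k) = e (j + int n - 1 - int k)) \<Longrightarrow> V_count e i n = V_count e j n"
proof (induction n arbitrary: j)
  case (Suc n)
  have "V_count e i n = V_count e (j + 1) n"
    by (rule Suc.IH) (use Suc.prems in \<open>auto simp: algebra_simps\<close>)
  moreover have "e (i + int n) = e j"
    using Suc.prems[of n] by simp
  ultimately show ?case
    using V_count_Suc[of e i n] V_count_Suc_left[of e j n] by (simp add: V_ind_def)
qed simp

lemma V_count_mult: "V_count e i (n * k) = (\<Sum>l<k. V_count e (i + int (l * n)) n)"
proof (induction k)
  case (Suc k)
  have "V_count e i (n * Suc k) = V_count e i (n * k) + V_count e (i + int (n * k)) n"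
    by (metis V_count_add mult_Suc_right add.commute)
  then show ?case
    using Suc by (simp add: mult.commute)
qed simp

section \<open>Sturmian sequences are balanced\<close>

definition balanced :: "biseq \<Rightarrow> bool" where
  "balanced e \<longleftrightarrow> (\<forall>i j n. V_count e j n \<le> V_count e i n + 1)"

definition unbalanced :: "biseq \<Rightarrow> nat \<Rightarrow> int \<Rightarrow> int \<Rightarrow> bool" where
  "unbalanced e n i j \<longleftrightarrow> V_count e i n + 2 \<le> V_count e j n"

definition framed_pair :: "biseq \<Rightarrow> nat \<Rightarrow> int \<Rightarrow> int \<Rightarrow> bool" where
  "framed_pair e m a b \<longleftrightarrow> e a = H \<and> e (a + int m + 1) = H \<and> e b = V \<and> e (b + int m + 1) = V \<and>
     (\<forall>k<m. e (a + 1 + int k) = e (b + 1 + int k))"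

lemma first_mismatch:
  fixes f g :: "nat \<Rightarrow> 'a"
  assumes "\<not> (\<forall>k<m. f k = g k)"
  obtains d where "d < m" "f d \<noteq> g d" "\<And>k. k < d \<Longrightarrow> f k = g k"
  using assms exists_least_iff[of "\<lambda>d. d < m \<and> f d \<noteq> g d"] by (metis less_trans)

lemma equal_inner_count_framed_or_unbalanced:
  assumes ends: "e i = H" "e j = V" "e (i + int m + 1) = H" "e (j + int m + 1) = V"
    and inner: "V_count e (i + 1) m = V_count e (j + 1) m"
  shows "framed_pair e m i j \<or> (\<exists>n i' j'. n < m + 2 \<and> unbalanced e n i' j')"
proof (cases "\<forall>k<m. e (i + 1 + int k) = e (j + 1 + int k)")
  case True
  then show ?thesis unfolding framed_pair_def using ends by simp
next
  case False
  then obtain d where d: "d < m" "e (i + 1 + int d) \<noteq> e (j + 1 + int d)"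
    and before: "\<And>k. k < d \<Longrightarrow> e (i + 1 + int k) = e (j + 1 + int k)"
    by (rule first_mismatch) blast+
  have prefix: "V_count e (i + 1) d = V_count e (j + 1) d"
    by (rule V_count_cong) (use before in \<open>simp add: ac_simps\<close>)
  consider "e (i + 1 + int d) = H" "e (j + 1 + int d) = V"
    | "e (i + 1 + int d) = V" "e (j + 1 + int d) = H"
    using d(2) letter_cases[of "e (i + 1 + int d)"] letter_cases[of "e (j + 1 + int d)"] by auto
  then show ?thesis
  proof cases
    case 1
    \<comment> \<open>the mismatch closes a short unbalanced pair at the left end\<close>
    have "unbalanced e (Suc (Suc d)) i j"
      using V_count_Suc_Suc[of e i d] V_count_Suc_Suc[of e j d] ends 1 prefix
      by (simp add: unbalanced_def V_ind_H V_ind_V)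
    then show ?thesis using d(1) by auto
  next
    case 2
    \<comment> \<open>the counts of the remaining suffixes then differ by one, and the right ends add one more\<close>
    define l where "l = m - d - 1"
    have split: "m = Suc d + l" using d(1) by (simp add: l_def)
    have suffix: "V_count e (j + 2 + int d) l = V_count e (i + 2 + int d) l + 1"
      using inner prefix 2 V_count_add[of e "i + 1" "Suc d" l] V_count_add[of e "j + 1" "Suc d" l]
        V_count_Suc[of e "i + 1" d] V_count_Suc[of e "j + 1" d]
      unfolding split[symmetric] by (simp add: V_ind_H V_ind_V ac_simps)
    have right: "i + 2 + int d + int l = i + int m + 1" "j + 2 + int d + int l = j + int m + 1"
      using d(1) by (simp_all add: l_def of_nat_diff)
    have "unbalanced e (Suc l) (i + 2 + int d) (j + 2 + int d)"
      using suffix ends V_count_Suc[of e "i + 2 + int d" l] V_count_Suc[of e "j + 2 + int d" l]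
      unfolding right by (simp add: unbalanced_def V_ind_H V_ind_V)
    then show ?thesis using d(1) by (auto simp: l_def)
  qed
qed

lemma unbalanced_framed_or_shorter:
  assumes unb: "unbalanced e n i j"
  shows "(\<exists>m a b. framed_pair e m a b \<and> m + 2 \<le> n) \<or> (\<exists>n' i' j'. n' < n \<and> unbalanced e n' i' j')"
proof -
  have "n \<ge> 2"
    using unb V_count_nonneg[of e i n] V_count_le[of e j n] by (simp add: unbalanced_def)
  then obtain m where m: "n = Suc (Suc m)"
    by (metis add_2_eq_Suc le_add_diff_inverse)
  have count_i: "V_count e i n = V_ind e i + V_count e (i + 1) m + V_ind e (i + 1 + int m)"
   and count_j: "V_count e j n = V_ind e j + V_count e (j + 1) m + V_ind e (j + 1 + int m)"
    unfolding m by (rule V_count_Suc_Suc)+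
  show ?thesis
  proof (cases "e i = H \<and> e j = V \<and> e (i + 1 + int m) = H \<and> e (j + 1 + int m) = V")
    case False
    \<comment> \<open>one of the end letters does not contribute to the imbalance and can be dropped\<close>
    then have "V_ind e j \<le> V_ind e i \<or> V_ind e (j + 1 + int m) \<le> V_ind e (i + 1 + int m)"
      using letter_cases[of "e i"] letter_cases[of "e j"] letter_cases[of "e (i + 1 + int m)"]
        letter_cases[of "e (j + 1 + int m)"]
      by (auto simp: V_ind_def)
    then have "unbalanced e (Suc m) (i + 1) (j + 1) \<or> unbalanced e (Suc m) i j"
      using unb count_i count_j V_count_Suc_left[of e i m] V_count_Suc_left[of e j m]
        V_count_Suc[of e "i + 1" m] V_count_Suc[of e "j + 1" m]
      by (auto simp: unbalanced_def ac_simps)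
    then show ?thesis using m by blast
  next
    case True
    define D where "D = V_count e (j + 1) m - V_count e (i + 1) m"
    have "D \<ge> 0" using unb True count_i count_j by (simp add: unbalanced_def D_def V_ind_H V_ind_V)
    then consider "D \<ge> 2" | "D = 1" | "D = 0" by linarith
    then show ?thesis
    proof cases
      case 1
      then have "unbalanced e m (i + 1) (j + 1)" by (simp add: unbalanced_def D_def)
      then show ?thesis using m by auto
    next
      case 2
      then have "unbalanced e (Suc m) i (j + 1)"
        using True V_count_Suc_left[of e i m] V_count_Suc[of e "j + 1" m]
        by (simp add: unbalanced_def D_def V_ind_H V_ind_V ac_simps)
      then show ?thesis using m by auto
    next
      case 3
      then have "framed_pair e m i j \<or> (\<exists>n i' j'. n < m + 2 \<and> unbalanced e n i' j')"
        by (intro equal_inner_count_framed_or_unbalanced) (use True D_def in \<open>simp_all add: ac_simps\<close>)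
      then show ?thesis using m by auto
    qed
  qed
qed

lemma unbalanced_imp_framed_pair:
  "unbalanced e n i j \<Longrightarrow> \<exists>m a b. framed_pair e m a b \<and> m + 2 \<le> n"
proof (induction n arbitrary: i j rule: less_induct)
  case (less n)
  from unbalanced_framed_or_shorter[OF less.prems] show ?case
    using less.IH by (meson le_trans less_imp_le)
qed

lemma framed_pair_with_palindrome:
  assumes "framed_pair e m0 a0 b0"
  shows "\<exists>m a b. framed_pair e m a b \<and> (\<forall>k<m. e (a + 1 + int k) = e (a + int m - int k))"
proof -
  obtain m where "\<exists>a b. framed_pair e m a b" and shortest: "\<And>m'. m' < m \<Longrightarrow> \<not> (\<exists>a b. framed_pair e m' a b)"
    using assms exists_least_iff[of "\<lambda>m. \<exists>a b. framed_pair e m a b"] by blast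
  then obtain a b where frame: "framed_pair e m a b" by blast
  have ends: "e a = H" "e (a + int m + 1) = H" "e b = V" "e (b + int m + 1) = V"
    and common: "\<And>k. k < m \<Longrightarrow> e (a + 1 + int k) = e (b + 1 + int k)"
    using frame unfolding framed_pair_def by auto
  show ?thesis
  proof (rule ccontr)
    assume "\<not> ?thesis"
    then have "\<not> (\<forall>k<m. e (a + 1 + int k) = e (a + int m - int k))"
      using frame by blast
    then obtain d where d: "d < m" "e (a + 1 + int d) \<noteq> e (a + int m - int d)"
      and before: "\<And>k. k < d \<Longrightarrow> e (a + 1 + int k) = e (a + int m - int k)"
      by (rule first_mismatch) blast+
    \<comment> \<open>the first asymmetry of \<open>w\<close> yields an unbalanced pair of length \<open>d + 2\<close>, by reading \<open>w\<close>
      forwards inside one frame and backwards inside the other\<close>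
    have common_rev: "e (b + int m - int k) = e (a + int m - int k)" if "k < m" for k
      using common[of "m - 1 - k"] that by (simp add: of_nat_diff algebra_simps)
    have rev_b: "V_count e (a + 1) d = V_count e (b + int m - int d + 1) d"
      by (rule V_count_rev) (use before common_rev d in \<open>auto simp: ac_simps\<close>)
    have rev_a: "V_count e (a + 1) d = V_count e (a + int m - int d + 1) d"
      by (rule V_count_rev) (use before d in \<open>auto simp: ac_simps\<close>)
    have fwd_b: "V_count e (a + 1) d = V_count e (b + 1) d"
      by (rule V_count_cong) (use common d in \<open>auto simp: ac_simps\<close>)
    have "unbalanced e (Suc (Suc d)) a (b + int m - int d) \<or>
          unbalanced e (Suc (Suc d)) (a + int m - int d) b"
    proof (cases "e (a + 1 + int d)")
      case H
      then have "e (b + int m - int d) = V"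
        using d common_rev[of d] letter_cases by metis
      then show ?thesis
        using V_count_Suc_Suc[of e a d] V_count_Suc_Suc[of e "b + int m - int d" d] H ends rev_b
        by (simp add: unbalanced_def V_ind_H V_ind_V ac_simps)
    next
      case V
      then have "e (a + int m - int d) = H"
        using d letter_cases by metis
      then show ?thesis
        using V_count_Suc_Suc[of e b d] V_count_Suc_Suc[of e "a + int m - int d" d]
          V ends fwd_b rev_a common[of d] d(1)
        by (simp add: unbalanced_def V_ind_H V_ind_V ac_simps)
    qed
    then obtain m' a' b' where "framed_pair e m' a' b'" "m' < m"
      using unbalanced_imp_framed_pair d(1) by (metis add_2_eq_Suc' add_le_cancel_right le_less_trans)
    then show False using shortest by blast
  qed
qed

definition factor :: "biseq \<Rightarrow> int \<Rightarrow> nat \<Rightarrow> letter list" where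
  "factor e i L = map (\<lambda>k. e (i + int k)) [0..<L]"

lemma subwords_eq_range_factor: "subwords e L = range (\<lambda>i. factor e i L)"
  unfolding subwords_def factor_def by auto

lemma factor_in_subwords: "factor e i L \<in> subwords e L"
  by (auto simp: subwords_eq_range_factor)

lemma length_factor [simp]: "length (factor e i L) = L"
  by (simp add: factor_def)

lemma factor_eq_iff: "factor e i L = factor e j L \<longleftrightarrow> (\<forall>k<L. e (i + int k) = e (j + int k))"
  unfolding factor_def by (auto simp: list_eq_iff_nth_eq)

lemma nth_factor: "k < L \<Longrightarrow> factor e i L ! k = e (i + int k)"
  by (simp add: factor_def)

lemma factor_Suc: "factor e i (Suc L) = factor e i L @ [e (i + int L)]"
  by (simp add: factor_def)

lemma factor_Suc_left: "factor e i (Suc L) = e i # factor e (i + 1) L"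
  unfolding factor_def by (simp add: map_upt_Suc ac_simps del: upt_Suc)

lemma factor_Suc_Suc: "factor e i (Suc (Suc L)) = e i # factor e (i + 1) L @ [e (i + 1 + int L)]"
  using factor_Suc_left[of e i "Suc L"] factor_Suc[of e "i + 1" L] by simp

lemma finite_subwords: "finite (subwords e L)"
proof (rule finite_subset)
  show "subwords e L \<subseteq> {xs. set xs \<subseteq> UNIV \<and> length xs = L}"
    by (auto simp: subwords_eq_range_factor)
  have "(UNIV :: letter set) = {H, V}"
    using letter_cases by auto
  then have "finite (UNIV :: letter set)"
    by (metis finite.emptyI finite.insertI)
  then show "finite {xs. set xs \<subseteq> (UNIV :: letter set) \<and> length xs = L}"
    by (rule finite_lists_length_eq)
qed

definition right_special :: "biseq \<Rightarrow> letter list \<Rightarrow> bool" where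
  "right_special e z \<longleftrightarrow>
     z @ [H] \<in> subwords e (Suc (length z)) \<and> z @ [V] \<in> subwords e (Suc (length z))"

lemma right_specialI:
  "z @ [x] \<in> subwords e (Suc (length z)) \<Longrightarrow> z @ [y] \<in> subwords e (Suc (length z)) \<Longrightarrow> x \<noteq> y
   \<Longrightarrow> right_special e z"
  unfolding right_special_def using letter_cases[of x] letter_cases[of y] by auto

lemma right_special_factorI:
  "factor e t L = factor e t' L \<Longrightarrow> e (t + int L) \<noteq> e (t' + int L) \<Longrightarrow> right_special e (factor e t L)"
  by (rule right_specialI[of _ "e (t + int L)" _ "e (t' + int L)"])
     (use factor_in_subwords[of e t "Suc L"] factor_in_subwords[of e t' "Suc L"] in \<open>auto simp: factor_Suc\<close>)

text \<open>Each factor of length \<open>L\<close> extends to one of length \<open>L + 1\<close>, and a right special one to two: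
  so complexity growing by exactly one leaves room for only one right special factor.\<close>
lemma right_special_unique:
  assumes card_Suc: "card (subwords e (Suc L)) = L + 2" and card: "card (subwords e L) = L + 1"
    and special: "right_special e z1" "right_special e z2"
    and length: "length z1 = L" "length z2 = L"
  shows "z1 = z2"
proof (rule ccontr)
  assume ne: "z1 \<noteq> z2"
  define F where "F = subwords e L"
  define G where "G = subwords e (Suc L)"
  define ext where "ext z = z @ [SOME c. z @ [c] \<in> G]" for z
  have ext_in: "ext z \<in> G" if "z \<in> F" for z
  proof -
    from that obtain i where "z = factor e i L"
      unfolding F_def subwords_eq_range_factor by auto
    then have "z @ [e (i + int L)] \<in> G"
      unfolding G_def using factor_in_subwords[of e i "Suc L"] by (simp add: factor_Suc)
    then show ?thesis unfolding ext_def by (rule someI)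
  qed
  define other where "other z = z @ [flip (SOME c. z @ [c] \<in> G)]" for z
  have other_in: "other z \<in> G" if "right_special e z" "length z = L" for z
    using that unfolding right_special_def other_def G_def flip_def by auto
  have other_new: "other z \<notin> ext ` F" for z
    unfolding other_def ext_def using flip_neq by auto
  have "other z1 \<noteq> other z2"
    using ne unfolding other_def by auto
  moreover have "inj_on ext F"
    unfolding ext_def inj_on_def by auto
  moreover have "finite F" "finite G"
    unfolding F_def G_def by (rule finite_subwords)+
  ultimately have "card (insert (other z1) (insert (other z2) (ext ` F))) = card F + 2"
    using other_new by (simp add: card_image)
  moreover have "card (insert (other z1) (insert (other z2) (ext ` F))) \<le> card G"
    using \<open>finite G\<close> ext_in other_in[OF special(1) length(1)] other_in[OF special(2) length(2)]
    by (intro card_mono) auto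
  ultimately have "card F + 2 \<le> card G"
    by simp
  then show False
    using card card_Suc by (simp add: F_def G_def)
qed

lemma factor_agreement_propagates:
  assumes det: "\<And>t t'. P t t' \<Longrightarrow> factor e t m = factor e t' m \<Longrightarrow> e (t + int m) = e (t' + int m)"
    and eq: "factor e x m = factor e y m"
    and P: "\<And>j. j + m < J \<Longrightarrow> P (x + int j) (y + int j)"
  shows "j < J \<Longrightarrow> e (x + int j) = e (y + int j)"
proof (induction j rule: less_induct)
  case (less j)
  show ?case
  proof (cases "j < m")
    case True
    then show ?thesis using eq by (simp add: factor_eq_iff)
  next
    case False
    have "factor e (x + int (j - m)) m = factor e (y + int (j - m)) m"
      unfolding factor_eq_iff
    proof (intro allI impI)
      fix k assume "k < m"
      then have "j - m + k < j" "j - m + k < J" using False less.prems by auto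
      from less.IH[OF this] show "e (x + int (j - m) + int k) = e (y + int (j - m) + int k)"
        by (simp add: ac_simps)
    qed
    moreover have "P (x + int (j - m)) (y + int (j - m))"
      using P[of "j - m"] less.prems False by simp
    ultimately have "e (x + int (j - m) + int m) = e (y + int (j - m) + int m)"
      using det by blast
    then show ?thesis
      using False by (simp add: ac_simps)
  qed
qed

lemma eventually_periodic_if_factor_determined:
  assumes det: "\<And>t t'. t \<ge> s0 \<Longrightarrow> t' \<ge> s0 \<Longrightarrow> factor e t m = factor e t' m \<Longrightarrow> e (t + int m) = e (t' + int m)"
    and card: "card (subwords e m) = m + 1"
  shows "eventually_periodic e"
proof -
  define f where "f n = factor e (s0 + int n) m" for n
  have "\<not> inj_on f {0..m+1}"
  proof
    assume "inj_on f {0..m+1}"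
    then have "card {0..m+1} \<le> card (subwords e m)"
      by (rule card_inj_on_le) (auto simp: f_def factor_in_subwords finite_subwords)
    then show False using card by simp
  qed
  then obtain n1 n2 where n: "n1 < n2" "f n1 = f n2"
    unfolding inj_on_def by (metis linorder_neqE_nat)
  have agree: "e (s0 + int n1 + int j) = e (s0 + int n2 + int j)" for j
  proof (rule factor_agreement_propagates[where P = "\<lambda>t t'. t \<ge> s0 \<and> t' \<ge> s0" and J = "Suc j"])
    show "factor e (s0 + int n1) m = factor e (s0 + int n2) m"
      using n(2) by (simp add: f_def)
    show "\<And>t t'. s0 \<le> t \<and> s0 \<le> t' \<Longrightarrow> factor e t m = factor e t' m \<Longrightarrow> e (t + int m) = e (t' + int m)"
      using det by blast
  qed auto
  have "e (x + (int n2 - int n1)) = e x" if "x \<ge> s0 + int n1" for x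
  proof -
    have "x = s0 + int n1 + int (nat (x - s0 - int n1))"
      using that by simp
    then show ?thesis
      using agree[of "nat (x - s0 - int n1)"] that by (simp add: algebra_simps)
  qed
  then show ?thesis
    unfolding eventually_periodic_def using n(1)
    by (intro exI[of _ "int n2 - int n1"] exI[of _ "s0 + int n1"]) auto
qed

text \<open>Pigeonhole: \<open>m + 1\<close> consecutive factors avoiding one of the \<open>m + 1\<close> values repeat.\<close>
lemma factor_repeats_avoiding:
  assumes card: "card (subwords e m) = m + 1" and "w \<in> subwords e m"
    and avoid: "\<And>k. k \<in> {1..m+1} \<Longrightarrow> factor e (s + int k) m \<noteq> w"
  obtains k1 k2 where "1 \<le> k1" "k1 < k2" "k2 \<le> m + 1" "factor e (s + int k1) m = factor e (s + int k2) m"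
proof -
  define g where "g k = factor e (s + int k) m" for k
  have "\<not> inj_on g {1..m+1}"
  proof
    assume "inj_on g {1..m+1}"
    moreover have "g ` {1..m+1} \<subseteq> subwords e m - {w}"
    proof
      fix z assume "z \<in> g ` {1..m+1}"
      then obtain k where "k \<in> {1..m+1}" "z = g k" by auto
      then show "z \<in> subwords e m - {w}"
        using avoid[of k] factor_in_subwords by (simp add: g_def)
    qed
    ultimately have "card {1..m+1} \<le> card (subwords e m - {w})"
      using card_inj_on_le finite_subwords by blast
    then show False
      using card \<open>w \<in> subwords e m\<close> finite_subwords[of e m] by simp
  qed
  then obtain x y where "x \<in> {1..m+1}" "y \<in> {1..m+1}" "x \<noteq> y" "g x = g y"
    unfolding inj_on_def by blast
  then show thesis
    by (intro that[of "min x y" "max x y"]) (auto simp: g_def min_def max_def)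
qed

lemma return_within_bound:
  assumes card: "card (subwords e m) = m + 1"
    and det: "\<And>t t'. factor e t m \<noteq> w \<Longrightarrow> factor e t m = factor e t' m \<Longrightarrow> e (t + int m) = e (t' + int m)"
    and occ: "factor e s m = w" and recur: "\<exists>t>s. factor e t m = w"
  shows "\<exists>t. s < t \<and> t \<le> s + int m + 1 \<and> factor e t m = w"
proof -
  define R where "R n \<longleftrightarrow> 1 \<le> n \<and> factor e (s + int n) m = w" for n
  obtain t0 where "t0 > s" "factor e t0 m = w" using recur by blast
  then have "R (nat (t0 - s))" unfolding R_def by simp
  then obtain n0 where first: "R n0" and before: "\<And>n. n < n0 \<Longrightarrow> \<not> R n"
    using exists_least_iff[of R] by blast
  show ?thesis
  proof (cases "n0 \<le> m + 1")
    case True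
    then show ?thesis using first unfolding R_def by (intro exI[of _ "s + int n0"]) auto
  next
    case False
    have "w \<in> subwords e m"
      using occ factor_in_subwords by metis
    moreover have "\<And>k. k \<in> {1..m+1} \<Longrightarrow> factor e (s + int k) m \<noteq> w"
      using before False unfolding R_def by auto
    ultimately obtain k1 k2 where k: "1 \<le> k1" "k1 < k2" "k2 \<le> m + 1"
      "factor e (s + int k1) m = factor e (s + int k2) m"
      by (rule factor_repeats_avoiding[OF card])
    \<comment> \<open>the repetition propagates up to position \<open>n0\<close>, giving an earlier occurrence of \<open>w\<close>\<close>
    have avoid: "factor e (s + int k1 + int j) m \<noteq> w" if "j + m < n0 - k2 + m" for j
      using before[of "k1 + j"] that k by (auto simp: R_def ac_simps)
    have agree: "e (s + int k1 + int j) = e (s + int k2 + int j)" if "j < n0 - k2 + m" for j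
      by (rule factor_agreement_propagates[where P = "\<lambda>t t'. factor e t m \<noteq> w", OF det k(4) avoid that])
    have "factor e (s + int (k1 + (n0 - k2))) m = factor e (s + int n0) m"
      unfolding factor_eq_iff
    proof (intro allI impI)
      fix k assume "k < m"
      then have "n0 - k2 + k < n0 - k2 + m" by simp
      from agree[OF this] show "e (s + int (k1 + (n0 - k2)) + int k) = e (s + int n0 + int k)"
        using False k by (simp add: of_nat_diff algebra_simps)
    qed
    then have "R (k1 + (n0 - k2))"
      using first k unfolding R_def by auto
    moreover have "k1 + (n0 - k2) < n0"
      using k False by auto
    ultimately show ?thesis using before by blast
  qed
qed

lemma sturmian_card_subwords: "sturmian e \<Longrightarrow> card (subwords e n) = n + 1"
  by (simp add: sturmian_def)

lemma sturmian_not_eventually_periodic: "sturmian e \<Longrightarrow> \<not> eventually_periodic e"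
  by (simp add: sturmian_def)

context
  fixes e :: biseq and w :: "letter list" and m :: nat
  assumes sturmian: "sturmian e"
    and length_w: "length w = m"
    and palindrome: "rev w = w"
    and frame_H: "H # w @ [H] \<in> subwords e (m + 2)"
    and frame_V: "V # w @ [V] \<in> subwords e (m + 2)"
begin

private lemma frame_interior:
  assumes "c # w @ [c'] \<in> subwords e (m + 2)"
  obtains i where "e i = c" "factor e (i + 1) m = w" "e (i + 1 + int m) = c'"
proof -
  obtain i where "factor e i (Suc (Suc m)) = c # w @ [c']"
    using assms by (auto simp: subwords_eq_range_factor)
  then show ?thesis
    using that[of i] length_w by (simp add: factor_Suc_Suc)
qed

private lemma right_special_w: "right_special e w"
proof (rule right_specialI)
  show "w @ [H] \<in> subwords e (Suc (length w))"
    using frame_H by (rule frame_interior) (metis factor_Suc factor_in_subwords length_w)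
  show "w @ [V] \<in> subwords e (Suc (length w))"
    using frame_V by (rule frame_interior) (metis factor_Suc factor_in_subwords length_w)
qed simp

private lemma continuation_unique:
  assumes "factor e t m = factor e t' m" "factor e t m \<noteq> w"
  shows "e (t + int m) = e (t' + int m)"
proof (rule ccontr)
  assume "e (t + int m) \<noteq> e (t' + int m)"
  with assms(1) have "right_special e (factor e t m)"
    by (rule right_special_factorI)
  moreover have "card (subwords e (Suc m)) = m + 2" "card (subwords e m) = m + 1"
    using sturmian_card_subwords[OF sturmian] by simp_all
  ultimately have "factor e t m = w"
    using right_special_w length_w by (intro right_special_unique[of e m]) simp_all
  with assms(2) show False ..
qed

private lemma occurs_infinitely: "\<exists>t>s. factor e t m = w"
proof (rule ccontr)
  assume none: "\<not> ?thesis"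
  have "eventually_periodic e"
  proof (intro eventually_periodic_if_factor_determined[of "s + 1" e m])
    fix t t' assume "s + 1 \<le> t" "factor e t m = factor e t' m"
    moreover have "factor e t m \<noteq> w"
      using none \<open>s + 1 \<le> t\<close> by auto
    ultimately show "e (t + int m) = e (t' + int m)"
      by (intro continuation_unique)
  qed (use sturmian_card_subwords[OF sturmian] in blast)
  then show False
    using sturmian by (simp add: sturmian_not_eventually_periodic)
qed

text \<open>A reflection argument: if \<open>w\<close> occurs at \<open>s\<close> and reoccurs at \<open>t\<close> overlapping or adjacent to it,
  then the letter before \<open>t\<close> is the mirror image, inside the palindrome \<open>w\<close>, of the letter after \<open>s\<close>.\<close>
private lemma predecessor_by_reflection:
  assumes s: "factor e s m = w" and t: "factor e t m = w" and st: "s < t" "t \<le> s + int m + 1"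
  shows "e (t - 1) = e (s + int m)"
proof (cases "t = s + int m + 1")
  case False
  define q where "q = nat (t - s)"
  have q: "t = s + int q" "1 \<le> q" "q \<le> m" using st False by (auto simp: q_def)
  have "e (t - 1) = w ! (q - 1)"
    using s q nth_factor[of "q - 1" m e s] by (simp add: of_nat_diff algebra_simps)
  also have "\<dots> = rev w ! (q - 1)"
    using palindrome by simp
  also have "\<dots> = w ! (m - q)"
    using q length_w by (simp add: rev_nth Suc_diff_le)
  also have "\<dots> = e (s + int m)"
    using t q nth_factor[of "m - q" m e t] by (simp add: of_nat_diff)
  finally show ?thesis .
qed simp

private lemma occurrences_followed_by:
  assumes not_special: "\<not> right_special e (c # w)" and c_w_c: "c # w @ [c] \<in> subwords e (m + 2)"
    and start: "factor e s m = w" "e (s + int m) = c"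
  shows "factor e (s + int n) m = w \<Longrightarrow> e (s + int n + int m) = c"
proof (induction n rule: less_induct)
  case (less n)
  show ?case
  proof (cases "n = 0")
    case True
    then show ?thesis using start by simp
  next
    case False
    \<comment> \<open>reach the occurrence at \<open>n\<close> from the last earlier one, which by induction is followed by \<open>c\<close>\<close>
    define T where "T = {k. k < n \<and> factor e (s + int k) m = w}"
    have "0 \<in> T" using False start by (simp add: T_def)
    then have "finite T" "T \<noteq> {}" by (auto simp: T_def)
    define k0 where "k0 = Max T"
    have k0: "k0 < n" "factor e (s + int k0) m = w" "\<And>k. k \<in> T \<Longrightarrow> k \<le> k0"
      using Max_in[OF \<open>finite T\<close> \<open>T \<noteq> {}\<close>] \<open>finite T\<close> by (auto simp: k0_def T_def)
    have c_k0: "e (s + int k0 + int m) = c"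
      using less.IH k0 by blast
    obtain t where t: "s + int k0 < t" "t \<le> s + int k0 + int m + 1" "factor e t m = w"
      using return_within_bound[OF sturmian_card_subwords[OF sturmian] continuation_unique k0(2)
        occurs_infinitely] by blast
    have "\<not> t < s + int n"
    proof
      assume "t < s + int n"
      then have "nat (t - s) \<in> T" using t by (auto simp: T_def)
      then have "nat (t - s) \<le> k0" by (rule k0(3))
      then show False using t by simp
    qed
    then have "e (s + int n - 1) = c"
      using predecessor_by_reflection[OF k0(2) less.prems] t k0 c_k0 by simp
    have "c # w @ [e (s + int n + int m)] \<in> subwords e (m + 2)"
    proof -
      have "factor e (s + int n - 1) (Suc (Suc m)) = c # w @ [e (s + int n + int m)]"
        using \<open>e (s + int n - 1) = c\<close> less.prems by (simp add: factor_Suc_Suc)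
      then show ?thesis using factor_in_subwords[of e "s + int n - 1" "Suc (Suc m)"] by simp
    qed
    then show ?thesis
      using not_special c_w_c right_specialI[of "c # w" _ e c] length_w by fastforce
  qed
qed

lemma sturmian_no_palindromic_frame: False
proof -
  have "card (subwords e (Suc (Suc m))) = Suc m + 2" "card (subwords e (Suc m)) = Suc m + 1"
    using sturmian_card_subwords[OF sturmian] by simp_all
  then have "\<not> (right_special e (H # w) \<and> right_special e (V # w))"
    using right_special_unique[of e "Suc m" "H # w" "V # w"] length_w by auto
  then obtain c where not_special: "\<not> right_special e (c # w)" and c_w_c: "c # w @ [c] \<in> subwords e (m + 2)"
    using frame_H frame_V by blast
  obtain s0 where s0: "factor e (s0 + 1) m = w" "e (s0 + 1 + int m) = c"
    using c_w_c by (rule frame_interior) blast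
  have "eventually_periodic e"
  proof (rule eventually_periodic_if_factor_determined[of "s0 + 1"])
    fix t t' assume tt: "s0 + 1 \<le> t" "s0 + 1 \<le> t'" "factor e t m = factor e t' m"
    show "e (t + int m) = e (t' + int m)"
    proof (cases "factor e t m = w")
      case True
      have "e (t + int m) = c" "e (t' + int m) = c"
        using occurrences_followed_by[OF not_special c_w_c s0, of "nat (t - s0 - 1)"]
          occurrences_followed_by[OF not_special c_w_c s0, of "nat (t' - s0 - 1)"] tt True
        by (simp_all add: ac_simps)
      then show ?thesis by simp
    qed (use continuation_unique tt in blast)
  qed (use sturmian_card_subwords[OF sturmian] in blast)
  then show False
    using sturmian by (simp add: sturmian_not_eventually_periodic)
qed

end

lemma sturmian_imp_balanced:
  assumes "sturmian e"
  shows "balanced e"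
proof (rule ccontr)
  assume "\<not> ?thesis"
  then obtain i j n where "\<not> V_count e j n \<le> V_count e i n + 1"
    by (auto simp: balanced_def)
  then have "unbalanced e n i j" by (simp add: unbalanced_def)
  then obtain m a b where frame: "framed_pair e m a b"
    and pal: "\<forall>k<m. e (a + 1 + int k) = e (a + int m - int k)"
    using unbalanced_imp_framed_pair framed_pair_with_palindrome by blast
  then have ends: "e a = H" "e (a + int m + 1) = H" "e b = V" "e (b + int m + 1) = V"
    and frames: "factor e (a + 1) m = factor e (b + 1) m"
    by (auto simp: framed_pair_def factor_eq_iff ac_simps)
  have palindrome: "rev (factor e (a + 1) m) = factor e (a + 1) m"
  proof (rule nth_equalityI)
    fix k assume "k < length (rev (factor e (a + 1) m))"
    then show "rev (factor e (a + 1) m) ! k = factor e (a + 1) m ! k"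
      using pal[rule_format, of k] by (simp add: rev_nth nth_factor of_nat_diff algebra_simps)
  qed simp
  have "H # factor e (a + 1) m @ [H] \<in> subwords e (m + 2)"
       "V # factor e (a + 1) m @ [V] \<in> subwords e (m + 2)"
    using factor_in_subwords[of e a "Suc (Suc m)"] factor_in_subwords[of e b "Suc (Suc m)"] ends frames
    by (simp_all add: factor_Suc_Suc ac_simps)
  from sturmian_no_palindromic_frame[OF assms _ palindrome this] show False by simp
qed

section \<open>Frequencies and mechanical words\<close>

text \<open>Cut a factor of length \<open>n k\<close> into \<open>k\<close> blocks of length \<open>n\<close>, or into \<open>n\<close> blocks of length \<open>k\<close>.\<close>
lemma balanced_cross_bound:
  assumes "balanced e"
  shows "int k * (V_count e i n - 1) \<le> int n * (V_count e j k + 1)"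
proof -
  have bal: "V_count e j' n' \<le> V_count e i' n' + 1" for i' j' n'
    using assms by (simp add: balanced_def)
  have "int k * (V_count e i n - 1) = (\<Sum>l<k. V_count e i n - 1)" by simp
  also have "\<dots> \<le> (\<Sum>l<k. V_count e (i + int (l * n)) n)"
    by (rule sum_mono) (use bal in \<open>smt (verit)\<close>)
  also have "\<dots> = V_count e i (n * k)" by (rule V_count_mult[symmetric])
  also have "\<dots> = V_count e i (k * n)" by (simp add: mult.commute)
  also have "\<dots> = (\<Sum>l<n. V_count e (i + int (l * k)) k)" by (rule V_count_mult)
  also have "\<dots> \<le> (\<Sum>l<n. V_count e j k + 1)" by (rule sum_mono) (use bal in \<open>smt (verit)\<close>)
  also have "\<dots> = int n * (V_count e j k + 1)" by simp
  finally show ?thesis .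
qed

definition frequency :: "biseq \<Rightarrow> real \<Rightarrow> bool" where
  "frequency e \<theta> \<longleftrightarrow> (\<forall>i n. n \<ge> 1 \<longrightarrow> \<bar>real_of_int (V_count e i n) - real n * \<theta>\<bar> \<le> 1)"

lemma balanced_has_frequency:
  assumes bal: "balanced e"
  obtains \<theta> where "frequency e \<theta>"
proof -
  define A where "A = {(real_of_int (V_count e i n) - 1) / real n | i n. n \<ge> 1}"
  have upper: "x \<le> (real_of_int (V_count e j k) + 1) / real k" if "x \<in> A" "k \<ge> 1" for x j k
  proof -
    obtain i n where x: "x = (real_of_int (V_count e i n) - 1) / real n" "n \<ge> 1"
      using \<open>x \<in> A\<close> A_def by auto
    have "real_of_int (int k * (V_count e i n - 1)) \<le> real_of_int (int n * (V_count e j k + 1))"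
      using balanced_cross_bound[OF bal, of k i n j] by (simp only: of_int_le_iff)
    then have le: "real k * (real_of_int (V_count e i n) - 1) \<le> real n * (real_of_int (V_count e j k) + 1)"
      by simp
    have "x = (real k * (real_of_int (V_count e i n) - 1)) / (real n * real k)"
      using x that by simp
    also have "\<dots> \<le> (real n * (real_of_int (V_count e j k) + 1)) / (real n * real k)"
      by (rule divide_right_mono[OF le]) simp
    also have "\<dots> = (real_of_int (V_count e j k) + 1) / real k"
      using x by simp
    finally show ?thesis .
  qed
  have "A \<noteq> {}" unfolding A_def by (auto intro!: exI[of _ 1])
  moreover have "bdd_above A" using upper[of _ 1 0] by (auto intro!: bdd_aboveI)
  ultimately have "frequency e (Sup A)"
    unfolding frequency_def
  proof (intro allI impI)
    fix i n assume n: "(n::nat) \<ge> 1"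
    have "(real_of_int (V_count e i n) - 1) / real n \<in> A" using n A_def by auto
    then have "(real_of_int (V_count e i n) - 1) / real n \<le> Sup A"
      using \<open>bdd_above A\<close> by (simp add: cSup_upper)
    moreover have "Sup A \<le> (real_of_int (V_count e i n) + 1) / real n"
      by (rule cSup_least[OF \<open>A \<noteq> {}\<close>]) (use upper n in auto)
    ultimately show "\<bar>real_of_int (V_count e i n) - real n * Sup A\<bar> \<le> 1"
      using n by (simp add: divide_simps abs_le_iff) (simp add: algebra_simps)
  qed
  then show thesis by (rule that)
qed

lemma finite_support_if_sparse_in_progressions:
  fixes d :: "int \<Rightarrow> int" and q :: nat
  assumes "q \<ge> 1" and sparse: "\<And>i L. L \<ge> 1 \<Longrightarrow> d i \<noteq> 0 \<Longrightarrow> d (i + int (L * q)) = 0"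
  shows "finite {i. d i \<noteq> 0}"
proof -
  have "inj_on (\<lambda>i. i mod int q) {i. d i \<noteq> 0}"
  proof (rule inj_onI)
    have no_pair: "i = j" if le: "i \<le> j" and nz: "d i \<noteq> 0" "d j \<noteq> 0"
      and congr: "i mod int q = j mod int q" for i j
    proof (rule ccontr)
      assume "i \<noteq> j"
      obtain L where L: "j - i = int q * L"
        using mod_eq_dvd_iff[THEN iffD1, OF congr[symmetric]] by blast
      then have "L > 0"
        using \<open>i \<noteq> j\<close> le \<open>q \<ge> 1\<close> by (smt (verit) mult_nonneg_nonpos of_nat_0_le_iff)
      then have "j = i + int (nat L * q)" "nat L \<ge> 1"
        using L by (simp_all add: algebra_simps)
      then show False using sparse[of "nat L" i] nz by simp
    qed
    fix i j assume "i \<in> {i. d i \<noteq> 0}" "j \<in> {i. d i \<noteq> 0}" "i mod int q = j mod int q"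
    then show "i = j"
      using no_pair[of i j] no_pair[of j i] by (cases "i \<le> j") auto
  qed
  moreover have "(\<lambda>i. i mod int q) ` {i. d i \<noteq> 0} \<subseteq> {0..<int q}"
    using \<open>q \<ge> 1\<close> by auto
  ultimately show ?thesis
    by (rule inj_on_finite) simp
qed

lemma eventually_periodic_if_block_counts_stable:
  assumes stable: "\<And>i. i \<ge> N \<Longrightarrow> V_count e i q = V_count e (i + 1) q" and "q \<ge> 1"
  shows "eventually_periodic e"
proof -
  have "e (n + int q) = e n" if "n \<ge> N" for n
  proof -
    have "V_ind e n = V_ind e (n + int q)"
      using stable[OF that] V_count_Suc_left[of e n q] V_count_Suc[of e n q] by simp
    then show ?thesis
      using letter_cases[of "e n"] letter_cases[of "e (n + int q)"] by (auto simp: V_ind_def)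
  qed
  then show ?thesis
    unfolding eventually_periodic_def using \<open>q \<ge> 1\<close> by (intro exI[of _ "int q"] exI[of _ N]) auto
qed

text \<open>With a rational frequency \<open>a / q\<close>, the deviations \<open>V_count e i q - a\<close> have a constant sign and
  sum to at most \<open>1\<close> in absolute value along each progression of step \<open>q\<close>; so they vanish
  eventually, and then \<open>e\<close> has period \<open>q\<close>.\<close>
lemma balanced_rational_frequency_imp_periodic:
  assumes bal: "balanced e" and freq: "frequency e \<theta>" and rat: "\<theta> \<in> \<rat>"
  shows "eventually_periodic e"
proof -
  obtain a b where ab: "b > 0" "\<theta> = of_int a / of_int b" using rat by (metis Rats_cases')
  define q where "q = nat b"
  have q: "q \<ge> 1" "real q * \<theta> = real_of_int a" using ab by (auto simp: q_def)
  define d where "d i = V_count e i q - a" for i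
  have block_sum: "\<bar>\<Sum>l<K. d (i + int (l * q))\<bar> \<le> 1" if "K \<ge> 1" for i K
  proof -
    have "V_count e i (q * K) = (\<Sum>l<K. d (i + int (l * q))) + int K * a"
      by (simp add: V_count_mult d_def sum_subtractf)
    moreover have "\<bar>real_of_int (V_count e i (q * K)) - real (q * K) * \<theta>\<bar> \<le> 1"
      by (rule freq[unfolded frequency_def, rule_format]) (use q that in simp)
    moreover have "real (q * K) * \<theta> = real_of_int (int K * a)"
      using q by (simp add: algebra_simps)
    ultimately show ?thesis by linarith
  qed
  have same_sign: "(\<forall>i. d i \<ge> 0) \<or> (\<forall>i. d i \<le> 0)"
  proof (rule ccontr)
    assume "\<not> ?thesis"
    then obtain i j where "d i < 0" "d j > 0" by (auto simp: not_le)
    moreover have "\<bar>d i\<bar> \<le> 1" "\<bar>d j\<bar> \<le> 1" using block_sum[of 1] by simp_all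
    ultimately have "V_count e j q = V_count e i q + 2" by (simp add: d_def)
    moreover have "V_count e j q \<le> V_count e i q + 1" using bal by (simp add: balanced_def)
    ultimately show False by simp
  qed
  have abs_sum: "(\<Sum>l<K. \<bar>d (i + int (l * q))\<bar>) \<le> 1" if "K \<ge> 1" for i K
    using same_sign
  proof
    assume "\<forall>i. d i \<ge> 0"
    then show ?thesis using block_sum[OF that, of i] by simp
  next
    assume "\<forall>i. d i \<le> 0"
    then have "(\<Sum>l<K. \<bar>d (i + int (l * q))\<bar>) = - (\<Sum>l<K. d (i + int (l * q)))"
      by (simp add: sum_negf[symmetric])
    then show ?thesis using block_sum[OF that, of i] by simp
  qed
  have sparse: "d (i + int (L * q)) = 0" if "L \<ge> 1" "d i \<noteq> 0" for i L
  proof (rule ccontr)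
    assume "d (i + int (L * q)) \<noteq> 0"
    then have "2 \<le> (\<Sum>l\<in>{0, L}. \<bar>d (i + int (l * q))\<bar>)" using that by simp
    also have "\<dots> \<le> (\<Sum>l<Suc L. \<bar>d (i + int (l * q))\<bar>)" by (rule sum_mono2) auto
    finally show False using abs_sum[of "Suc L" i] by simp
  qed
  have "finite {i. d i \<noteq> 0}"
    by (rule finite_support_if_sparse_in_progressions[of q d, OF q(1) sparse])
  then obtain M where M: "\<And>i. d i \<noteq> 0 \<Longrightarrow> i \<le> M"
    using bdd_above_finite unfolding bdd_above_def by blast
  have "V_count e i q = V_count e (i + 1) q" if "i \<ge> M + 1" for i
  proof -
    have "d i = 0" "d (i + 1) = 0" using M[of i] M[of "i + 1"] that by linarith+
    then show ?thesis by (simp add: d_def)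
  qed
  then show ?thesis
    using q(1) by (rule eventually_periodic_if_block_counts_stable)
qed

lemma frequency_in_unit_interval:
  assumes freq: "frequency e \<theta>" and irr: "\<theta> \<notin> \<rat>"
  shows "0 < \<theta>" "\<theta> < 1"
proof -
  have "\<theta> \<noteq> 0" "\<theta> \<noteq> 1" using irr by auto
  show "0 < \<theta>"
  proof (rule ccontr)
    assume "\<not> 0 < \<theta>"
    then obtain n where n: "1 < real n * (-\<theta>)"
      using ex_less_of_nat_mult \<open>\<theta> \<noteq> 0\<close> by (metis neg_0_less_iff_less not_less_iff_gr_or_eq)
    then have "n \<ge> 1" by (cases n) auto
    then show False
      using freq n V_count_nonneg[of e 0 n] by (auto simp: frequency_def dest!: spec[of _ 0] spec[of _ n])
  qed
  show "\<theta> < 1"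
  proof (rule ccontr)
    assume "\<not> \<theta> < 1"
    then obtain n where n: "1 < real n * (\<theta> - 1)"
      using ex_less_of_nat_mult \<open>\<theta> \<noteq> 1\<close> by (metis diff_gt_0_iff_gt linorder_neqE_linordered_idom)
    then have "n \<ge> 1" by (cases n) auto
    then show False
      using freq n V_count_le[of e 0 n]
      by (auto simp: frequency_def algebra_simps dest!: spec[of _ 0] spec[of _ n])
  qed
qed

text \<open>Upper and lower mechanical words of slope \<open>\<theta>\<close> and intercept \<open>r\<close> (Lothaire, Algebraic
  Combinatorics on Words, ch. 2), with \<open>V\<close> for the letter 1.\<close>
definition upper_mechanical :: "biseq \<Rightarrow> real \<Rightarrow> real \<Rightarrow> bool" where
  "upper_mechanical e \<theta> r \<longleftrightarrow>
     (\<forall>n. e n = (if \<lceil>real_of_int (n + 1) * \<theta> + r\<rceil> = \<lceil>real_of_int n * \<theta> + r\<rceil> + 1 then V else H))"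

definition lower_mechanical :: "biseq \<Rightarrow> real \<Rightarrow> real \<Rightarrow> bool" where
  "lower_mechanical e \<theta> r \<longleftrightarrow>
     (\<forall>n. e n = (if \<lfloor>real_of_int (n + 1) * \<theta> + r\<rfloor> = \<lfloor>real_of_int n * \<theta> + r\<rfloor> + 1 then V else H))"

lemma letter_from_V_prefix:
  "f (n + 1) = V_prefix e (n + 1) \<Longrightarrow> f n = V_prefix e n \<Longrightarrow> e n = (if f (n + 1) = f n + 1 then V else H)"
  using V_prefix_succ[of e n] letter_cases[of "e n"] by (auto simp: V_ind_def)

lemma frequency_prefix_deviation:
  assumes freq: "frequency e \<theta>" and irr: "\<theta> \<notin> \<rat>" and "i < j"
  shows "\<bar>(real_of_int (V_prefix e j) - real_of_int j * \<theta>) - (real_of_int (V_prefix e i) - real_of_int i * \<theta>)\<bar> < 1"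
    (is "\<bar>?D\<bar> < 1")
proof -
  define n where "n = nat (j - i)"
  have n: "n \<ge> 1" "real n = real_of_int j - real_of_int i" "i + int n = j"
    using \<open>i < j\<close> by (auto simp: n_def)
  have D: "?D = real_of_int (V_count e i n) - real n * \<theta>"
    unfolding V_count_def n(3) by (simp add: n(2) algebra_simps)
  have "\<bar>?D\<bar> \<le> 1"
    using freq n(1) unfolding D frequency_def by blast
  moreover have "\<bar>?D\<bar> \<noteq> 1"
  proof
    assume "\<bar>?D\<bar> = 1"
    then have "\<theta> = (real_of_int (V_count e i n) - 1) / real n \<or> \<theta> = (real_of_int (V_count e i n) + 1) / real n"
      using n(1) unfolding D by (auto simp: abs_if field_simps split: if_splits)
    then show False
      using irr by (auto intro!: Rats_divide)
  qed
  ultimately show ?thesis by simp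
qed

text \<open>The deviations \<open>V_prefix e i - i \<theta>\<close> lie in a half-open interval of length one; whether it is
  closed at the top or at the bottom decides between the lower and the upper mechanical word.\<close>
lemma frequency_imp_mechanical:
  assumes freq: "frequency e \<theta>" and irr: "\<theta> \<notin> \<rat>"
  shows "\<exists>r. upper_mechanical e \<theta> r \<or> lower_mechanical e \<theta> r"
proof -
  define c where "c i = real_of_int (V_prefix e i) - real_of_int i * \<theta>" for i
  have close: "c j - c i < 1" if "i \<noteq> j" for i j
    using frequency_prefix_deviation[OF freq irr, of i j] frequency_prefix_deviation[OF freq irr, of j i] that
    by (cases "i < j") (auto simp: c_def)
  have "c j \<le> c i + 1" for i j
    using close[of i j] by (cases "i = j") auto
  then have bdd: "bdd_above (range c)" and top: "Sup (range c) \<le> c i + 1" for i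
    by (auto intro!: bdd_aboveI[of _ "c 0 + 1"] cSup_least)
  define \<rho> where "\<rho> = Sup (range c)"
  have upper: "c i \<le> \<rho>" for i
    unfolding \<rho>_def using bdd by (simp add: cSup_upper)
  have lower: "\<rho> - 1 \<le> c i" for i
    using top[of i] by (simp add: \<rho>_def)
  show ?thesis
  proof (cases "\<exists>i0. c i0 = \<rho> - 1")
    case True
    then obtain i0 where i0: "c i0 = \<rho> - 1" by blast
    have "c i < \<rho>" for i
      using upper[of i] close[of i0 i] i0 by (cases "i = i0") auto
    then have "\<lceil>real_of_int i * \<theta> + (\<rho> - 1)\<rceil> = V_prefix e i" for i
      unfolding ceiling_eq_iff using lower[of i] by (simp add: c_def algebra_simps)
    then have "upper_mechanical e \<theta> (\<rho> - 1)"
      unfolding upper_mechanical_def by (intro allI letter_from_V_prefix)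
    then show ?thesis by blast
  next
    case False
    then have "\<rho> - 1 < c i" for i
      using lower[of i] by (metis order_le_imp_less_or_eq)
    then have "\<lfloor>real_of_int i * \<theta> + \<rho>\<rfloor> = V_prefix e i" for i
      unfolding floor_eq_iff using upper[of i] by (simp add: c_def algebra_simps)
    then have "lower_mechanical e \<theta> \<rho>"
      unfolding lower_mechanical_def by (intro allI letter_from_V_prefix)
    then show ?thesis by blast
  qed
qed

lemma sturmian_mechanical:
  assumes "sturmian e"
  obtains \<theta> r where "\<theta> \<notin> \<rat>" "0 < \<theta>" "\<theta> < 1" "upper_mechanical e \<theta> r \<or> lower_mechanical e \<theta> r"
proof -
  have bal: "balanced e"
    using assms by (rule sturmian_imp_balanced)
  then obtain \<theta> where freq: "frequency e \<theta>"
    by (rule balanced_has_frequency)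
  have irr: "\<theta> \<notin> \<rat>"
    using balanced_rational_frequency_imp_periodic[OF bal freq] assms
    by (auto simp: sturmian_not_eventually_periodic)
  show thesis
    using that frequency_in_unit_interval[OF freq irr] frequency_imp_mechanical[OF freq irr] irr by blast
qed

section \<open>Mechanical words as cutting sequences\<close>

lemma ceiling_step:
  assumes "0 < \<theta>" "\<theta> < 1"
  shows "\<lceil>real_of_int n * \<theta> + r\<rceil> \<le> \<lceil>real_of_int (n + 1) * \<theta> + r\<rceil>"
    and "\<lceil>real_of_int (n + 1) * \<theta> + r\<rceil> \<le> \<lceil>real_of_int n * \<theta> + r\<rceil> + 1"
proof -
  have shift: "real_of_int (n + 1) * \<theta> + r = real_of_int n * \<theta> + r + \<theta>"
    by (simp add: algebra_simps)
  show "\<lceil>real_of_int n * \<theta> + r\<rceil> \<le> \<lceil>real_of_int (n + 1) * \<theta> + r\<rceil>"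
    by (rule ceiling_mono) (use assms shift in simp)
  have "\<lceil>real_of_int (n + 1) * \<theta> + r\<rceil> \<le> \<lceil>(real_of_int n * \<theta> + r) + 1\<rceil>"
    by (rule ceiling_mono) (use assms shift in simp)
  then show "\<lceil>real_of_int (n + 1) * \<theta> + r\<rceil> \<le> \<lceil>real_of_int n * \<theta> + r\<rceil> + 1"
    by simp
qed

text \<open>Parametrize the geodesic \<open>s \<mapsto> (-r + (1 - \<theta>) s, r + \<theta> s)\<close> by \<open>s = x + y\<close>. For the upper
  mechanical word, the grid line crossed while \<open>s\<close> runs through \<open>[n, n + 1]\<close> is horizontal exactly
  when \<open>e n = V\<close>, and \<open>mechanical_crossing e \<theta> r n\<close> is the value of \<open>s\<close> at that crossing.\<close>
definition mechanical_crossing :: "biseq \<Rightarrow> real \<Rightarrow> real \<Rightarrow> int \<Rightarrow> real" where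
  "mechanical_crossing e \<theta> r n =
     (if e n = V then (real_of_int \<lceil>real_of_int n * \<theta> + r\<rceil> - r) / \<theta>
      else (real_of_int n + 1 - real_of_int \<lceil>real_of_int n * \<theta> + r\<rceil> + r) / (1 - \<theta>))"

context
  fixes e :: biseq and \<theta> r :: real
  assumes pos: "0 < \<theta>" and less_one: "\<theta> < 1" and mech: "upper_mechanical e \<theta> r"
begin

private abbreviation C :: "int \<Rightarrow> int" where
  "C n \<equiv> \<lceil>real_of_int n * \<theta> + r\<rceil>"

private abbreviation s :: "int \<Rightarrow> real" where
  "s \<equiv> mechanical_crossing e \<theta> r"

lemma upper_mechanical_letter: "e n = (if C (n + 1) = C n + 1 then V else H)"
  using mech unfolding upper_mechanical_def by blast

private lemma mechanical_crossing_V: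
  assumes "e n = V"
  shows "real_of_int n \<le> s n" "s n < real_of_int n + 1"
proof -
  have step: "C (n + 1) = C n + 1"
    using upper_mechanical_letter[of n] assms by (auto split: if_splits)
  have "\<theta> * real_of_int n + r \<le> real_of_int (C n)"
    using le_of_int_ceiling[of "real_of_int n * \<theta> + r"] by (simp add: mult.commute)
  moreover have "real_of_int (C n) < \<theta> * real_of_int n + r + \<theta>"
    using ceiling_correct[of "real_of_int (n + 1) * \<theta> + r"] step by (simp add: algebra_simps)
  moreover have "\<theta> * s n = real_of_int (C n) - r"
    using assms pos by (simp add: mechanical_crossing_def)
  moreover have "\<theta> * (real_of_int n + 1) = \<theta> * real_of_int n + \<theta>"
    by (simp add: distrib_left)
  ultimately have "\<theta> * real_of_int n \<le> \<theta> * s n" "\<theta> * s n < \<theta> * (real_of_int n + 1)"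
    by linarith+
  then show "real_of_int n \<le> s n" "s n < real_of_int n + 1"
    using pos by (simp_all add: mult_le_cancel_left_pos mult_less_cancel_left_pos)
qed

private lemma mechanical_crossing_H:
  assumes "e n = H"
  shows "real_of_int n < s n" "s n \<le> real_of_int n + 1"
proof -
  have step: "C (n + 1) = C n"
    using upper_mechanical_letter[of n] assms ceiling_step[OF pos less_one, of n r] by (auto split: if_splits)
  have "real_of_int (C n) < \<theta> * real_of_int n + r + 1"
    using ceiling_correct[of "real_of_int n * \<theta> + r"] by (simp add: mult.commute)
  moreover have "\<theta> * real_of_int n + r + \<theta> \<le> real_of_int (C n)"
  proof -
    have "real_of_int (n + 1) * \<theta> + r \<le> real_of_int (C (n + 1))"
      by (rule le_of_int_ceiling)
    then show ?thesis
      unfolding step by (simp add: algebra_simps)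
  qed
  moreover have "(1 - \<theta>) * s n = real_of_int n + 1 - real_of_int (C n) + r"
    using assms less_one by (simp add: mechanical_crossing_def)
  moreover have "(1 - \<theta>) * real_of_int n = real_of_int n - \<theta> * real_of_int n"
    "(1 - \<theta>) * (real_of_int n + 1) = real_of_int n + 1 - \<theta> * real_of_int n - \<theta>"
    by (simp_all add: algebra_simps)
  ultimately have "(1 - \<theta>) * real_of_int n < (1 - \<theta>) * s n"
    "(1 - \<theta>) * s n \<le> (1 - \<theta>) * (real_of_int n + 1)"
    by (smt (verit))+
  then show "real_of_int n < s n" "s n \<le> real_of_int n + 1"
    using less_one by (simp_all add: mult_le_cancel_left_pos mult_less_cancel_left_pos)
qed

private lemma mechanical_crossing_bounds: "real_of_int n \<le> s n" "s n \<le> real_of_int n + 1"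
  using mechanical_crossing_V[of n] mechanical_crossing_H[of n] letter_cases[of "e n"] by auto

private lemma mono_mechanical_crossing: "mono s"
proof (rule monoI)
  fix i j :: int assume "i \<le> j"
  then consider "i = j" | "real_of_int i + 1 \<le> real_of_int j" by linarith
  then show "s i \<le> s j"
    using mechanical_crossing_bounds[of i] mechanical_crossing_bounds[of j] by cases auto
qed

private lemma inj_mechanical_crossing: "inj (\<lambda>n. (s n, e n))"
proof (rule injI)
  have no_tie: False if "a < b" "s a = s b" "e a = e b" for a b
  proof -
    have "real_of_int a + 1 \<le> real_of_int b"
      using that by linarith
    then have "s a = real_of_int a + 1" "s b = real_of_int b"
      using mechanical_crossing_bounds[of a] mechanical_crossing_bounds[of b] that by auto
    then show False
      using mechanical_crossing_V[of a] mechanical_crossing_H[of b] that letter_cases[of "e a"] by auto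
  qed
  fix i j assume "(s i, e i) = (s j, e j)"
  then show "i = j"
    using no_tie[of i j] no_tie[of j i] by (cases i j rule: linorder_cases) auto
qed

private lemma mechanical_crossing_event:
  "((1 - \<theta>) * s n, e n) \<in> crossing_events (-r, r) (\<theta> / (1 - \<theta>))"
proof (cases "e n")
  case V
  then have "r + \<theta> / (1 - \<theta>) * ((1 - \<theta>) * s n) = real_of_int (C n)"
    using pos less_one by (simp add: mechanical_crossing_def field_simps)
  then show ?thesis
    using V by (simp add: crossing_events_def)
next
  case H
  then have "-r + (1 - \<theta>) * s n = real_of_int (n + 1 - C n)"
    using less_one by (simp add: mechanical_crossing_def field_simps)
  then show ?thesis
    using H by (simp add: crossing_events_def)
qed

private lemma mechanical_crossing_H_surj:
  assumes "-r + (1 - \<theta>) * x \<in> \<int>"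
  shows "\<exists>n. s n = x \<and> e n = H"
proof -
  obtain k where k: "-r + (1 - \<theta>) * x = real_of_int k"
    using assms by (auto elim: Ints_cases)
  define n where "n = \<lceil>x\<rceil> - 1"
  have "real_of_int n < x" "x \<le> real_of_int n + 1"
    unfolding n_def by (simp_all add: ceiling_correct)
  then have "(1 - \<theta>) * real_of_int n < (1 - \<theta>) * x" "(1 - \<theta>) * x \<le> (1 - \<theta>) * (real_of_int n + 1)"
    using less_one by (simp_all add: mult_strict_left_mono mult_left_mono)
  then have "C n = n + 1 - k" "C (n + 1) = n + 1 - k"
    unfolding ceiling_eq_iff using k pos by (simp_all add: algebra_simps)
  then have "e n = H" "s n = x"
    using upper_mechanical_letter[of n] k less_one by (simp_all add: mechanical_crossing_def field_simps)
  then show ?thesis by blast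
qed

private lemma mechanical_crossing_V_surj:
  assumes "r + \<theta> * x \<in> \<int>"
  shows "\<exists>n. s n = x \<and> e n = V"
proof -
  obtain k where k: "r + \<theta> * x = real_of_int k"
    using assms by (auto elim: Ints_cases)
  define n where "n = \<lfloor>x\<rfloor>"
  have "real_of_int n \<le> x" "x < real_of_int n + 1"
    unfolding n_def by simp_all
  then have "\<theta> * real_of_int n \<le> \<theta> * x" "\<theta> * x < \<theta> * (real_of_int n + 1)"
    using pos by (simp_all add: mult_strict_left_mono mult_left_mono)
  then have "C n = k" "C (n + 1) = k + 1"
    unfolding ceiling_eq_iff using k less_one by (simp_all add: algebra_simps)
  then have "e n = V" "s n = x"
    using upper_mechanical_letter[of n] k pos by (simp_all add: mechanical_crossing_def field_simps)
  then show ?thesis by blast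
qed

lemma upper_mechanical_cutting_sequence: "cutting_sequence (-r, r) (\<theta> / (1 - \<theta>)) e"
  unfolding cutting_sequence_def
proof (intro exI conjI)
  show "mono (\<lambda>n. (1 - \<theta>) * s n)"
    using mono_mechanical_crossing less_one by (simp add: mono_def mult_left_mono)
  have "inj (\<lambda>n. ((1 - \<theta>) * s n, e n))"
    using inj_mechanical_crossing less_one by (auto simp: inj_def)
  moreover have "(t, L) \<in> range (\<lambda>n. ((1 - \<theta>) * s n, e n))"
    if "(t, L) \<in> crossing_events (-r, r) (\<theta> / (1 - \<theta>))" for t L
  proof -
    have t: "(1 - \<theta>) * (t / (1 - \<theta>)) = t"
      using less_one by simp
    show ?thesis
    proof (cases L)
      case H
      have "-r + t \<in> \<int>"
        using that H by (simp add: crossing_events_def)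
      then obtain n where "s n = t / (1 - \<theta>)" "e n = H"
        using mechanical_crossing_H_surj[of "t / (1 - \<theta>)"] t by auto
      then show ?thesis
        using H t by (auto intro!: image_eqI[of _ _ n])
    next
      case V
      have "r + \<theta> * (t / (1 - \<theta>)) \<in> \<int>"
        using that V by (simp add: crossing_events_def)
      then obtain n where "s n = t / (1 - \<theta>)" "e n = V"
        using mechanical_crossing_V_surj by blast
      then show ?thesis
        using V t by (auto intro!: image_eqI[of _ _ n])
    qed
  qed
  ultimately show "bij_betw (\<lambda>n. ((1 - \<theta>) * s n, e n)) UNIV (crossing_events (-r, r) (\<theta> / (1 - \<theta>)))"
    unfolding bij_betw_def using mechanical_crossing_event by auto
qed

end

section \<open>Symmetric mechanical words and Weierstrass points\<close>

lemma irrational_multiples_dense: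
  assumes irr: "\<theta> \<notin> \<rat>" and "a < b"
  shows "\<exists>n h. n \<noteq> N \<and> a < real_of_int n * \<theta> + s - real_of_int h \<and> real_of_int n * \<theta> + s - real_of_int h < b"
proof -
  define M where "M = \<bar>N\<bar> + 1"
  define \<alpha> where "\<alpha> = (a + b) / 2 - s - real_of_int M * \<theta>"
  have "(b - a) / 2 > 0" using \<open>a < b\<close> by simp
  from sequence_of_fractional_parts_is_dense[OF irr this, of \<alpha>]
  obtain h k where hk: "k > 0" "\<bar>real_of_int k * \<theta> - real_of_int h - \<alpha>\<bar> < (b - a) / 2"
    by blast
  have "real_of_int (k + M) * \<theta> + s - real_of_int h = (real_of_int k * \<theta> - real_of_int h - \<alpha>) + (a + b) / 2"
    by (simp add: \<alpha>_def algebra_simps)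
  moreover have "k + M \<noteq> N"
    using hk(1) by (simp add: M_def)
  ultimately show ?thesis
    using hk(2) unfolding abs_less_iff by (intro exI[of _ "k + M"] exI[of _ h]) (auto simp: field_simps)
qed

text \<open>A ceiling and a floor along the same irrational progression can only differ by a constant
  (off one index) if their intercepts are rigidly related.\<close>
lemma ceiling_eq_floor_shift:
  assumes irr: "\<theta> \<notin> \<rat>"
    and eq: "\<And>n. n \<noteq> N \<Longrightarrow> \<lceil>real_of_int n * \<theta> + r\<rceil> = \<lfloor>real_of_int n * \<theta> + \<rho>\<rfloor> + K"
  shows "\<rho> = r + 1 - real_of_int K"
proof (rule ccontr)
  assume ne: "\<rho> \<noteq> r + 1 - real_of_int K"
  define d where "d = \<rho> - r - 1 + real_of_int K"
  have key: "\<lceil>z\<rceil> = \<lfloor>z + d\<rfloor> + 1" if "n \<noteq> N" "z = real_of_int n * \<theta> + r" for n z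
  proof -
    have "real_of_int n * \<theta> + \<rho> = (z + d) + real_of_int (1 - K)"
      using that(2) by (simp add: d_def)
    then have "\<lfloor>real_of_int n * \<theta> + \<rho>\<rfloor> = \<lfloor>z + d\<rfloor> + 1 - K"
      by (simp only: floor_add_int) simp
    then show ?thesis using eq[OF that(1)] that(2) by simp
  qed
  show False
  proof (cases "d > 0")
    case True
    obtain n h where nh: "n \<noteq> N" "1 - min d 1 < real_of_int n * \<theta> + r - real_of_int h"
      "real_of_int n * \<theta> + r - real_of_int h < 1"
      using irrational_multiples_dense[OF irr, of "1 - min d 1" 1 N r] True by auto
    have "\<lceil>real_of_int n * \<theta> + r\<rceil> = h + 1" "h + 1 \<le> \<lfloor>real_of_int n * \<theta> + r + d\<rfloor>"
      unfolding ceiling_eq_iff le_floor_iff using nh True by auto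
    then show False using key[OF nh(1) refl] by simp
  next
    case False
    then have "d < 0" using ne by (simp add: d_def)
    obtain n h where nh: "n \<noteq> N" "0 < real_of_int n * \<theta> + r - real_of_int h"
      "real_of_int n * \<theta> + r - real_of_int h < min (-d) 1"
      using irrational_multiples_dense[OF irr, of 0 "min (-d) 1" N r] \<open>d < 0\<close> by auto
    have "\<lceil>real_of_int n * \<theta> + r\<rceil> = h + 1" "\<lfloor>real_of_int n * \<theta> + r + d\<rfloor> < h"
      unfolding ceiling_eq_iff floor_less_iff using nh by auto
    then show False using key[OF nh(1) refl] by simp
  qed
qed

lemma reflected_ceiling_sum_constant:
  assumes irr: "\<theta> \<notin> \<rat>"
    and const: "\<And>n. n \<noteq> N \<Longrightarrow> \<lceil>real_of_int n * \<theta> + r\<rceil> + \<lceil>real_of_int (c + 1 - n) * \<theta> + r\<rceil> = K"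
  shows "2 * r + real_of_int (c + 1) * \<theta> \<in> \<int>"
proof -
  define \<rho> where "\<rho> = - real_of_int (c + 1) * \<theta> - r"
  have "\<lceil>real_of_int n * \<theta> + r\<rceil> = \<lfloor>real_of_int n * \<theta> + \<rho>\<rfloor> + K" if "n \<noteq> N" for n
  proof -
    have "\<lfloor>real_of_int n * \<theta> + \<rho>\<rfloor> = - \<lceil>real_of_int (c + 1 - n) * \<theta> + r\<rceil>"
      unfolding ceiling_def \<rho>_def by (simp add: algebra_simps)
    then show ?thesis using const[OF that] by simp
  qed
  from ceiling_eq_floor_shift[OF irr this] have "\<rho> = r + 1 - real_of_int K" .
  then have "2 * r + real_of_int (c + 1) * \<theta> = real_of_int (K - 1)"
    by (simp add: \<rho>_def algebra_simps)
  then show ?thesis by (metis Ints_of_int)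
qed

lemma half_integer_cases:
  assumes "2 * x \<in> \<int>"
  obtains h where "h \<in> {0, 1/2 :: real}" "x - h \<in> \<int>"
proof -
  obtain X where X: "2 * x = real_of_int X"
    using assms by (auto elim: Ints_cases)
  have "X = 2 * (X div 2) + X mod 2" by simp
  then have "real_of_int X = 2 * real_of_int (X div 2) + real_of_int (X mod 2)"
    by (metis of_int_add of_int_mult of_int_numeral)
  then have x: "x - real_of_int (X mod 2) / 2 = real_of_int (X div 2)"
    using X by linarith
  have "X mod 2 = 0 \<or> X mod 2 = 1" by presburger
  then consider "X mod 2 = 0" | "X mod 2 = 1" by blast
  then show thesis
  proof cases
    case 1
    then show thesis using that[of 0] x by simp
  next
    case 2
    then show thesis using that[of "1/2"] x by simp
  qed
qed

lemma weierstrass_point_of_half_integers: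
  assumes "2 * x \<in> \<int>" "2 * y \<in> \<int>"
  obtains q where "q \<in> weierstrass_points" "x - fst q \<in> \<int>" "y - snd q \<in> \<int>"
proof -
  obtain h1 h2 where h: "h1 \<in> {0, 1/2}" "x - h1 \<in> \<int>" "h2 \<in> {0, 1/2}" "y - h2 \<in> \<int>"
    using half_integer_cases assms by metis
  then have "(h1, h2) \<in> weierstrass_points"
    unfolding weierstrass_points_def ptA_def ptB_def ptC_def ptD_def by auto
  then show thesis using that h by force
qed

text \<open>At the parameter \<open>s = (c + 1) / 2\<close> the point of the geodesic has half-integer coordinates.\<close>
lemma upper_mechanical_geodesic_passes_weierstrass:
  assumes "0 < \<theta>" "\<theta> < 1" and half: "2 * r + real_of_int (c + 1) * \<theta> \<in> \<int>"
  shows "\<exists>q\<in>weierstrass_points. passes_through (-r, r) (\<theta> / (1 - \<theta>)) q"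
proof -
  define t where "t = (1 - \<theta>) * (real_of_int (c + 1) / 2)"
  have y: "2 * (r + \<theta> / (1 - \<theta>) * t) = 2 * r + real_of_int (c + 1) * \<theta>"
    using assms by (simp add: t_def field_simps)
  have x: "2 * (-r + t) = real_of_int (c + 1) - (2 * r + real_of_int (c + 1) * \<theta>)"
    by (simp add: t_def field_simps)
  have "2 * (-r + t) \<in> \<int>" "2 * (r + \<theta> / (1 - \<theta>) * t) \<in> \<int>"
    unfolding x y using half by (auto intro: Ints_diff)
  then obtain q where "q \<in> weierstrass_points" "(-r + t) - fst q \<in> \<int>" "(r + \<theta> / (1 - \<theta>) * t) - snd q \<in> \<int>"
    by (rule weierstrass_point_of_half_integers)
  then show ?thesis
    unfolding passes_through_def by auto
qed

lemma int_step_constant: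
  assumes "\<And>n. f (n + 1) = f n"
  shows "f (n :: int) = f k"
proof (induction n rule: int_induct[where k = k])
  case (step2 i)
  then show ?case using assms[of "i - 1"] by simp
qed (use assms in simp_all)

lemma int_step_constant_except:
  assumes step: "\<And>n. n \<noteq> N - 1 \<Longrightarrow> n \<noteq> N \<Longrightarrow> f (n + 1) = f n"
    and jump: "f (N + 1) = f (N - 1)" and "(n :: int) \<noteq> N"
  shows "f n = f (N + 1)"
proof (cases "n \<ge> N + 1")
  case True
  have "n \<ge> N + 1 \<longrightarrow> f n = f (N + 1)"
  proof (induction n rule: int_induct[where k = "N + 1"])
    case (step1 i)
    then show ?case using step[of i] by auto
  qed auto
  then show ?thesis using True by simp
next
  case False
  then have "n \<le> N - 1" using \<open>n \<noteq> N\<close> by simp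
  have "n \<le> N - 1 \<longrightarrow> f n = f (N + 1)"
  proof (induction n rule: int_induct[where k = "N - 1"])
    case (step2 i)
    then show ?case using step[of "i - 1"] by auto
  qed (use jump in auto)
  then show ?thesis using \<open>n \<le> N - 1\<close> by simp
qed

lemma odd_symmetric_reflection: "odd_symmetric e \<Longrightarrow> \<exists>N. \<forall>n. e (2 * N - n) = e n"
proof -
  assume "odd_symmetric e"
  then obtain N where h: "\<And>k. e (N + int k) = e (N - int k)"
    unfolding odd_symmetric_def by blast
  have "e (2 * N - n) = e n" for n
    using h[of "nat (n - N)"] h[of "nat (N - n)"] by (cases "n \<ge> N") simp_all
  then show ?thesis by blast
qed

lemma even_symmetric_reflection: "even_symmetric e \<Longrightarrow> \<exists>N. \<forall>n. e (2 * N - 1 - n) = e n"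
proof -
  assume "even_symmetric e"
  then obtain N where h: "\<And>k. e (N + int k) = e (N - int k - 1)"
    unfolding even_symmetric_def by blast
  have "e (2 * N - 1 - n) = e n" for n
    using h[of "nat (n - N)"] h[of "nat (N - 1 - n)"] by (cases "n \<ge> N") (simp_all add: algebra_simps)
  then show ?thesis by blast
qed

lemma almost_symmetric_reflection:
  "almost_symmetric e \<Longrightarrow>
     \<exists>N. (\<forall>n. n \<noteq> N - 1 \<longrightarrow> n \<noteq> N \<longrightarrow> e (2 * N - 1 - n) = e n) \<and> e N \<noteq> e (N - 1)"
proof -
  assume "almost_symmetric e"
  then obtain N where h: "\<And>k. k \<ge> 1 \<Longrightarrow> e (N + int k) = e (N - int k - 1)" and ne: "e N \<noteq> e (N - 1)"
    unfolding almost_symmetric_def by blast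
  have "e (2 * N - 1 - n) = e n" if "n \<noteq> N - 1" "n \<noteq> N" for n
    using h[of "nat (n - N)"] h[of "nat (N - 1 - n)"] that by (cases "n \<ge> N") (simp_all add: algebra_simps)
  then show ?thesis using ne by blast
qed

lemma upper_mechanical_ceiling_increment:
  assumes "0 < \<theta>" "\<theta> < 1" "upper_mechanical e \<theta> r"
  shows "\<lceil>real_of_int (n + 1) * \<theta> + r\<rceil> - \<lceil>real_of_int n * \<theta> + r\<rceil> = V_ind e n"
  using upper_mechanical_letter[OF assms, of n] ceiling_step[OF assms(1,2), of n r]
  by (auto simp: V_ind_def split: if_splits)

text \<open>A reflection \<open>n \<mapsto> c - n\<close> of the letters makes \<open>\<lceil>n \<theta> + r\<rceil> + \<lceil>(c + 1 - n) \<theta> + r\<rceil>\<close>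
  constant in \<open>n\<close>, except at one index in the almost symmetric case.\<close>
lemma symmetric_upper_mechanical_half_integer:
  assumes irr: "\<theta> \<notin> \<rat>" and "0 < \<theta>" "\<theta> < 1" and mech: "upper_mechanical e \<theta> r"
    and sym: "symmetric e"
  obtains c where "2 * r + real_of_int (c + 1) * \<theta> \<in> \<int>"
proof -
  define C where "C n = \<lceil>real_of_int n * \<theta> + r\<rceil>" for n
  define F where "F c n = C n + C (c + 1 - n)" for c n
  have step: "F c (n + 1) = F c n" if "e (c - n) = e n" for c n
    using upper_mechanical_ceiling_increment[OF \<open>0 < \<theta>\<close> \<open>\<theta> < 1\<close> mech, of n]
      upper_mechanical_ceiling_increment[OF \<open>0 < \<theta>\<close> \<open>\<theta> < 1\<close> mech, of "c - n"] that
    by (simp add: F_def C_def V_ind_def algebra_simps)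
  obtain N c K where const: "\<And>n. n \<noteq> N \<Longrightarrow> F c n = K"
  proof -
    consider N where "\<forall>n. e (2 * N - n) = e n" | N where "\<forall>n. e (2 * N - 1 - n) = e n"
      | N where "\<forall>n. n \<noteq> N - 1 \<longrightarrow> n \<noteq> N \<longrightarrow> e (2 * N - 1 - n) = e n" "e N \<noteq> e (N - 1)"
      using sym odd_symmetric_reflection even_symmetric_reflection almost_symmetric_reflection
      unfolding symmetric_def by blast
    then show thesis
    proof cases
      case (1 N)
      have "F (2 * N) (n + 1) = F (2 * N) n" for n
        by (rule step) (use 1 in blast)
      then have "F (2 * N) n = F (2 * N) 0" for n
        by (rule int_step_constant[of "F (2 * N)"])
      then show thesis by (intro that[of 0 "2 * N" "F (2 * N) 0"])
    next
      case (2 N)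
      have "F (2 * N - 1) (n + 1) = F (2 * N - 1) n" for n
        by (rule step) (use 2 in blast)
      then have "F (2 * N - 1) n = F (2 * N - 1) 0" for n
        by (rule int_step_constant[of "F (2 * N - 1)"])
      then show thesis by (intro that[of 0 "2 * N - 1" "F (2 * N - 1) 0"])
    next
      case (3 N)
      have "F (2 * N - 1) (n + 1) = F (2 * N - 1) n" if "n \<noteq> N - 1" "n \<noteq> N" for n
        by (rule step) (use 3(1) that in blast)
      moreover have "F (2 * N - 1) (N + 1) = F (2 * N - 1) (N - 1)"
        by (simp add: F_def algebra_simps)
      ultimately have "F (2 * N - 1) n = F (2 * N - 1) (N + 1)" if "n \<noteq> N" for n
        using that by (rule int_step_constant_except[of N "F (2 * N - 1)"])
      then show thesis by (intro that[of N "2 * N - 1" "F (2 * N - 1) (N + 1)"])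
    qed
  qed
  then show thesis
    using reflected_ceiling_sum_constant[OF irr, of N r c K] that by (simp add: F_def C_def)
qed

lemma upper_mechanical_symmetric_passes_weierstrass:
  assumes irr: "\<theta> \<notin> \<rat>" and "0 < \<theta>" "\<theta> < 1" and mech: "upper_mechanical e \<theta> r"
    and sym: "symmetric e"
  shows "\<exists>p \<alpha>. unif_distributed \<alpha> \<and> cutting_sequence p \<alpha> e \<and> (\<exists>q\<in>weierstrass_points. passes_through p \<alpha> q)"
proof -
  obtain c where "2 * r + real_of_int (c + 1) * \<theta> \<in> \<int>"
    using symmetric_upper_mechanical_half_integer[OF assms] .
  then have "\<exists>q\<in>weierstrass_points. passes_through (-r, r) (\<theta> / (1 - \<theta>)) q"
    using upper_mechanical_geodesic_passes_weierstrass \<open>0 < \<theta>\<close> \<open>\<theta> < 1\<close> by blast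
  moreover have "unif_distributed (\<theta> / (1 - \<theta>))"
  proof -
    have "\<theta> / (1 - \<theta>) \<notin> \<rat>"
    proof
      assume "\<theta> / (1 - \<theta>) \<in> \<rat>"
      then obtain a where a: "a \<in> \<rat>" "\<theta> / (1 - \<theta>) = a" by blast
      then have "a / (1 + a) \<in> \<rat>"
        by (simp add: Rats_divide Rats_add)
      moreover have "a > 0"
        using a(2) \<open>0 < \<theta>\<close> \<open>\<theta> < 1\<close> by (metis diff_gt_0_iff_gt divide_pos_pos)
      then have "a / (1 + a) = \<theta>"
        using \<open>\<theta> < 1\<close> a(2) by (auto simp: field_simps)
      ultimately show False
        using irr by simp
    qed
    then show ?thesis
      using \<open>0 < \<theta>\<close> \<open>\<theta> < 1\<close> by (simp add: unif_distributed_def)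
  qed
  ultimately show ?thesis
    using upper_mechanical_cutting_sequence[OF \<open>0 < \<theta>\<close> \<open>\<theta> < 1\<close> mech] by blast
qed

text \<open>Exchanging the letters turns a lower mechanical word of slope \<open>\<theta>\<close> into an upper one of
  slope \<open>1 - \<theta>\<close>; geometrically this is the reflection in the diagonal.\<close>
lemma lower_mechanical_flip:
  assumes "0 < \<theta>" "\<theta> < 1" and mech: "lower_mechanical e \<theta> \<rho>"
  shows "upper_mechanical (flip \<circ> e) (1 - \<theta>) (- \<rho>)"
  unfolding upper_mechanical_def
proof
  fix n
  have ceiling_flip: "\<lceil>real_of_int m * (1 - \<theta>) + - \<rho>\<rceil> = m - \<lfloor>real_of_int m * \<theta> + \<rho>\<rfloor>" for m
  proof -
    have "real_of_int m * (1 - \<theta>) + - \<rho> = real_of_int m - (real_of_int m * \<theta> + \<rho>)"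
      by (simp add: algebra_simps)
    then show ?thesis unfolding ceiling_def by (simp add: algebra_simps)
  qed
  have shift: "real_of_int (n + 1) * \<theta> + \<rho> = real_of_int n * \<theta> + \<rho> + \<theta>"
    by (simp add: algebra_simps)
  have "\<lfloor>real_of_int n * \<theta> + \<rho>\<rfloor> \<le> \<lfloor>real_of_int (n + 1) * \<theta> + \<rho>\<rfloor>"
    by (rule floor_mono) (use assms shift in simp)
  moreover have "\<lfloor>real_of_int (n + 1) * \<theta> + \<rho>\<rfloor> \<le> \<lfloor>(real_of_int n * \<theta> + \<rho>) + 1\<rfloor>"
    by (rule floor_mono) (use assms shift in simp)
  moreover have "e n = (if \<lfloor>real_of_int (n + 1) * \<theta> + \<rho>\<rfloor> = \<lfloor>real_of_int n * \<theta> + \<rho>\<rfloor> + 1 then V else H)"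
    using mech unfolding lower_mechanical_def by blast
  ultimately show "(flip \<circ> e) n =
      (if \<lceil>real_of_int (n + 1) * (1 - \<theta>) + - \<rho>\<rceil> = \<lceil>real_of_int n * (1 - \<theta>) + - \<rho>\<rceil> + 1 then V else H)"
    unfolding ceiling_flip by auto
qed

lemma symmetric_flip: "symmetric e \<Longrightarrow> symmetric (flip \<circ> e)"
  unfolding symmetric_def odd_symmetric_def even_symmetric_def almost_symmetric_def
  by (auto simp: flip_eq_iff)

lemma cutting_sequence_flip_swap:
  assumes pos: "\<alpha> > 0" and cut: "cutting_sequence p \<alpha> (flip \<circ> e)"
  shows "cutting_sequence (snd p, fst p) (1 / \<alpha>) e"
proof -
  obtain \<tau> where mono: "mono \<tau>" and bij: "bij_betw (\<lambda>i. (\<tau> i, (flip \<circ> e) i)) UNIV (crossing_events p \<alpha>)"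
    using cut unfolding cutting_sequence_def by blast
  define \<phi> where "\<phi> x = (\<alpha> * fst x, flip (snd x))" for x :: "real \<times> letter"
  have "bij_betw \<phi> (crossing_events p \<alpha>) (crossing_events (snd p, fst p) (1 / \<alpha>))"
  proof (rule bij_betwI[where g = "\<lambda>x. (fst x / \<alpha>, flip (snd x))"])
    show "\<phi> \<in> crossing_events p \<alpha> \<rightarrow> crossing_events (snd p, fst p) (1 / \<alpha>)"
      using pos by (auto simp: \<phi>_def crossing_events_def)
    show "(\<lambda>x. (fst x / \<alpha>, flip (snd x))) \<in> crossing_events (snd p, fst p) (1 / \<alpha>) \<rightarrow> crossing_events p \<alpha>"
      using pos by (auto simp: crossing_events_def)
  qed (use pos in \<open>auto simp: \<phi>_def\<close>)
  from bij_betw_trans[OF bij this]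
  have "bij_betw (\<lambda>i. (\<alpha> * \<tau> i, e i)) UNIV (crossing_events (snd p, fst p) (1 / \<alpha>))"
    by (simp add: \<phi>_def comp_def)
  moreover have "mono (\<lambda>i. \<alpha> * \<tau> i)"
    using mono pos by (auto simp: mono_def mult_left_mono)
  ultimately show ?thesis
    unfolding cutting_sequence_def by blast
qed

lemma passes_through_swap:
  assumes "\<alpha> > 0" and "passes_through p \<alpha> q"
  shows "passes_through (snd p, fst p) (1 / \<alpha>) (snd q, fst q)"
proof -
  obtain t where "fst p + t - fst q \<in> \<int>" "snd p + \<alpha> * t - snd q \<in> \<int>"
    using assms(2) unfolding passes_through_def by blast
  then show ?thesis
    unfolding passes_through_def using assms(1) by (intro exI[of _ "\<alpha> * t"]) auto
qed

lemma weierstrass_points_swap: "q \<in> weierstrass_points \<Longrightarrow> (snd q, fst q) \<in> weierstrass_points"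
  unfolding weierstrass_points_def ptA_def ptB_def ptC_def ptD_def by auto

lemma unif_distributed_inverse: "unif_distributed \<alpha> \<Longrightarrow> unif_distributed (1 / \<alpha>)"
  unfolding unif_distributed_def by (auto dest: Rats_inverse simp: divide_inverse)

lemma sturmian_symmetric_passes_weierstrass:
  assumes sturm: "sturmian e" and sym: "symmetric e"
  shows "\<exists>p \<alpha>. unif_distributed \<alpha> \<and> cutting_sequence p \<alpha> e \<and> (\<exists>q\<in>weierstrass_points. passes_through p \<alpha> q)"
proof -
  obtain \<theta> r where \<theta>: "\<theta> \<notin> \<rat>" "0 < \<theta>" "\<theta> < 1"
    and mech: "upper_mechanical e \<theta> r \<or> lower_mechanical e \<theta> r"
    by (rule sturmian_mechanical[OF sturm])
  show ?thesis
  proof (cases "upper_mechanical e \<theta> r")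
    case True
    then show ?thesis using upper_mechanical_symmetric_passes_weierstrass[OF \<theta> True sym] by blast
  next
    case False
    \<comment> \<open>exchange the letters, and come back by reflecting the geodesic in the diagonal\<close>
    then have "upper_mechanical (flip \<circ> e) (1 - \<theta>) (-r)"
      using mech lower_mechanical_flip \<theta>(2,3) by blast
    moreover have "1 - \<theta> \<notin> \<rat>"
    proof
      assume "1 - \<theta> \<in> \<rat>"
      from Rats_diff[OF Rats_1 this] show False using \<theta>(1) by simp
    qed
    ultimately obtain p \<alpha> q where p: "unif_distributed \<alpha>" "cutting_sequence p \<alpha> (flip \<circ> e)"
      "q \<in> weierstrass_points" "passes_through p \<alpha> q"
      using upper_mechanical_symmetric_passes_weierstrass[of "1 - \<theta>" "flip \<circ> e" "-r"]
        symmetric_flip[OF sym] \<theta>(2,3) by auto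
    then have "\<alpha> > 0"
      by (simp add: unif_distributed_def)
    have "unif_distributed (1 / \<alpha>)" "cutting_sequence (snd p, fst p) (1 / \<alpha>) e"
      "(snd q, fst q) \<in> weierstrass_points" "passes_through (snd p, fst p) (1 / \<alpha>) (snd q, fst q)"
      using unif_distributed_inverse[OF p(1)] cutting_sequence_flip_swap[OF \<open>\<alpha> > 0\<close> p(2)]
        weierstrass_points_swap[OF p(3)] passes_through_swap[OF \<open>\<alpha> > 0\<close> p(4)] .
    then show ?thesis by blast
  qed
qed

section \<open>Symmetries of cutting sequences through Weierstrass points\<close>

lemma decreasing_surj_int:
  fixes s :: "int \<Rightarrow> int"
  assumes surj: "surj s" and dec: "\<And>i j. i < j \<Longrightarrow> s j < s i"
  shows "s i = s 0 - i"
proof -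
  have step: "s (n + 1) + (n + 1) = s n + n" for n
  proof -
    obtain j where j: "s j = s n - 1"
      using surjD[OF surj, of "s n - 1"] by metis
    have "s (n + 1) = s n - 1"
    proof (cases "j < n")
      case True
      then show ?thesis using dec[OF True] j by simp
    next
      case False
      then consider "j = n" | "j = n + 1" | "n + 1 < j" by linarith
      then show ?thesis
      proof cases
        case 3
        then show ?thesis using dec[of n "n + 1"] dec[OF 3] j by simp
      qed (use j in simp_all)
    qed
    then show ?thesis by simp
  qed
  have "s i + i = s 0 + 0"
    by (rule int_step_constant[of "\<lambda>n. s n + n"]) (rule step)
  then show ?thesis by simp
qed

definition reflected_index :: "(int \<Rightarrow> real) \<Rightarrow> biseq \<Rightarrow> real \<Rightarrow> int \<Rightarrow> int" where
  "reflected_index \<tau> e t0 i = (SOME j. \<tau> j = 2 * t0 - \<tau> i \<and> e j = e i)"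

context
  fixes p :: "real \<times> real" and \<alpha> :: real and e :: biseq and \<tau> :: "int \<Rightarrow> real"
  assumes irr: "\<alpha> \<notin> \<rat>" and mono_\<tau>: "mono \<tau>"
    and enum: "bij_betw (\<lambda>i. (\<tau> i, e i)) UNIV (crossing_events p \<alpha>)"
begin

private abbreviation E :: "(real \<times> letter) set" where
  "E \<equiv> crossing_events p \<alpha>"

private abbreviation corner :: "real \<Rightarrow> bool" where
  "corner t \<equiv> (t, H) \<in> E \<and> (t, V) \<in> E"

private lemma enum_in: "(\<tau> i, e i) \<in> E"
  using enum unfolding bij_betw_def by auto

private lemma enum_inj: "\<tau> i = \<tau> j \<Longrightarrow> e i = e j \<Longrightarrow> i = j"
  using enum unfolding bij_betw_def inj_def by auto

private lemma enum_surj: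
  assumes "(t, L) \<in> E"
  shows "\<exists>i. \<tau> i = t \<and> e i = L"
proof -
  have "(t, L) \<in> range (\<lambda>i. (\<tau> i, e i))"
    using enum assms by (simp add: bij_betw_def)
  then show ?thesis by auto
qed

lemma H_event_iff: "(t, H) \<in> E \<longleftrightarrow> fst p + t \<in> \<int>"
  and V_event_iff: "(t, V) \<in> E \<longleftrightarrow> snd p + \<alpha> * t \<in> \<int>"
  by (simp_all add: crossing_events_def)

text \<open>Two corners would give a lattice vector of rational slope \<open>\<alpha>\<close>.\<close>
private lemma corner_unique:
  assumes "corner t" "corner t'"
  shows "t = t'"
proof (rule ccontr)
  assume "t \<noteq> t'"
  have x: "fst p + t \<in> \<int>" "fst p + t' \<in> \<int>" and y: "snd p + \<alpha> * t \<in> \<int>" "snd p + \<alpha> * t' \<in> \<int>"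
    using assms by (simp_all add: H_event_iff V_event_iff)
  obtain a where "(fst p + t) - (fst p + t') = real_of_int a"
    using Ints_diff[OF x] by (rule Ints_cases)
  moreover obtain b where "(snd p + \<alpha> * t) - (snd p + \<alpha> * t') = real_of_int b"
    using Ints_diff[OF y] by (rule Ints_cases)
  ultimately have a: "t - t' = real_of_int a" and b: "\<alpha> * (t - t') = real_of_int b"
    by (simp_all add: algebra_simps)
  have "a \<noteq> 0" using a \<open>t \<noteq> t'\<close> by auto
  then have "\<alpha> = real_of_int b / real_of_int a" using a b by (simp add: field_simps)
  then show False using irr by simp
qed

private lemma tie_imp_corner:
  assumes "\<tau> i = \<tau> j" "i \<noteq> j"
  shows "corner (\<tau> i)"
proof -
  have "e i \<noteq> e j" using enum_inj assms by blast
  then show ?thesis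
    using enum_in[of i] enum_in[of j] assms letter_cases[of "e i"] letter_cases[of "e j"] by auto
qed

text \<open>At time \<open>t0\<close> the geodesic passes through a point with half-integer coordinates; the half-turn
  about that point maps the geodesic onto itself, reversing time.\<close>
context
  fixes t0 :: real
  assumes half_x: "2 * (fst p + t0) \<in> \<int>" and half_y: "2 * (snd p + \<alpha> * t0) \<in> \<int>"
begin

private abbreviation \<sigma> :: "int \<Rightarrow> int" where
  "\<sigma> \<equiv> reflected_index \<tau> e t0"

private lemma event_reflect:
  assumes "(t, L) \<in> E"
  shows "(2 * t0 - t, L) \<in> E"
proof (cases L)
  case H
  have "fst p + (2 * t0 - t) = 2 * (fst p + t0) - (fst p + t)" by simp
  then show ?thesis
    using assms H half_x H_event_iff by (metis Ints_diff)
next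
  case V
  have "snd p + \<alpha> * (2 * t0 - t) = 2 * (snd p + \<alpha> * t0) - (snd p + \<alpha> * t)"
    by (simp add: algebra_simps)
  then show ?thesis
    using assms V half_y V_event_iff by (metis Ints_diff)
qed

private lemma corner_at_center: "corner t \<Longrightarrow> t = t0"
  using corner_unique[of t "2 * t0 - t"] event_reflect by fastforce

private lemma reflected_index: "\<tau> (\<sigma> i) = 2 * t0 - \<tau> i" "e (\<sigma> i) = e i"
proof -
  have "\<exists>j. \<tau> j = 2 * t0 - \<tau> i \<and> e j = e i"
    using enum_surj event_reflect enum_in by blast
  from someI_ex[OF this] show "\<tau> (\<sigma> i) = 2 * t0 - \<tau> i" "e (\<sigma> i) = e i"
    unfolding reflected_index_def by blast+
qed

private lemma reflected_index_involution: "\<sigma> (\<sigma> i) = i"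
  using reflected_index[of i] reflected_index[of "\<sigma> i"] enum_inj by simp

private lemma reflected_index_antimono:
  assumes "\<tau> i < \<tau> j"
  shows "\<sigma> j < \<sigma> i"
proof (rule ccontr)
  assume "\<not> \<sigma> j < \<sigma> i"
  then have "\<tau> (\<sigma> i) \<le> \<tau> (\<sigma> j)"
    using mono_\<tau> by (simp add: monoD)
  then show False
    using reflected_index(1)[of i] reflected_index(1)[of j] assms by simp
qed

private lemma reflected_index_fixed: "\<tau> i = t0 \<Longrightarrow> \<sigma> i = i"
  using reflected_index[of i] enum_inj by simp

private lemma reflected_index_affine:
  assumes "\<not> corner t0"
  obtains c where "\<And>i. \<sigma> i = c - i"
proof -
  have "\<tau> i < \<tau> j" if "i < j" for i j
  proof -
    have "\<tau> i \<le> \<tau> j"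
      using mono_\<tau> that by (simp add: monoD)
    moreover have "\<tau> i \<noteq> \<tau> j"
    proof
      assume "\<tau> i = \<tau> j"
      then have "corner (\<tau> i)"
        using tie_imp_corner that by simp
      then show False
        using corner_at_center assms by metis
    qed
    ultimately show ?thesis by simp
  qed
  then have dec: "\<sigma> j < \<sigma> i" if "i < j" for i j
    using reflected_index_antimono that by blast
  have "surj \<sigma>"
    by (rule surjI[of _ \<sigma>]) (rule reflected_index_involution)
  from decreasing_surj_int[OF this dec] show thesis by (rule that)
qed

lemma even_symmetric_if_no_event_at_center:
  assumes none: "\<And>L. (t0, L) \<notin> E"
  shows "even_symmetric e"
proof -
  obtain c where c: "\<And>i. \<sigma> i = c - i"
    using reflected_index_affine none by blast
  have "odd c"
  proof
    assume "even c"
    then obtain m where "c = 2 * m" by (rule evenE)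
    then have "\<tau> m = t0"
      using c[of m] reflected_index(1)[of m] by simp
    then show False
      using enum_in[of m] none by simp
  qed
  then obtain b where "c = 2 * b + 1"
    by (rule oddE)
  then have N: "c = 2 * (b + 1) - 1"
    by simp
  define N where "N = b + 1"
  have "e (N + int k) = e (N - int k - 1)" for k
    using reflected_index(2)[of "N + int k"] c[of "N + int k"] N by (simp add: N_def)
  then show ?thesis unfolding even_symmetric_def by blast
qed

lemma odd_symmetric_if_single_event_at_center:
  assumes event: "(t0, L) \<in> E" and not_corner: "\<not> corner t0"
  shows "odd_symmetric e"
proof -
  obtain c where c: "\<And>i. \<sigma> i = c - i"
    using reflected_index_affine not_corner by blast
  obtain i0 where "\<tau> i0 = t0"
    using enum_surj[OF event] by blast
  then have "c = 2 * i0"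
    using reflected_index_fixed c[of i0] by simp
  then have "e (i0 + int k) = e (i0 - int k)" for k
    using reflected_index(2)[of "i0 + int k"] c[of "i0 + int k"] by simp
  then show ?thesis unfolding odd_symmetric_def by blast
qed

private lemma corner_indices:
  assumes "corner t0"
  obtains N where "\<tau> (N - 1) = t0" "\<tau> N = t0" "e N \<noteq> e (N - 1)" "\<And>i. \<tau> i = t0 \<Longrightarrow> i = N - 1 \<or> i = N"
proof -
  obtain a b where a: "\<tau> a = t0" "e a = H" and b: "\<tau> b = t0" "e b = V"
    using enum_surj assms by meson
  have only: "i = a \<or> i = b" if "\<tau> i = t0" for i
    using that a b enum_inj[of i a] enum_inj[of i b] letter_cases[of "e i"] by auto
  have "a \<noteq> b" using a b by auto
  define N where "N = max a b"
  have "min a b = N - 1"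
  proof (rule ccontr)
    assume "min a b \<noteq> N - 1"
    then have lt: "min a b < N - 1"
      using \<open>a \<noteq> b\<close> by (auto simp: N_def min_def max_def)
    have "\<tau> (min a b) \<le> \<tau> (N - 1)" "\<tau> (N - 1) \<le> \<tau> N"
      using mono_\<tau> lt by (auto simp: mono_def)
    moreover have "\<tau> (min a b) = t0" "\<tau> N = t0"
      using a b by (auto simp: N_def min_def max_def)
    ultimately have "\<tau> (N - 1) = t0" by simp
    from only[OF this] lt show False by (auto simp: N_def)
  qed
  then have "{a, b} = {N - 1, N}"
    by (auto simp: N_def min_def max_def)
  then have "\<tau> (N - 1) = t0" "\<tau> N = t0" "e N \<noteq> e (N - 1)"
    and "\<And>i. \<tau> i = t0 \<Longrightarrow> i = N - 1 \<or> i = N"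
    using only a b by (auto simp: doubleton_eq_iff)
  then show thesis
    by (rule that)
qed

text \<open>At a corner the half-turn fixes both letters recorded there, which the cutting sequence writes
  in some order \<open>N - 1, N\<close>: composing \<open>\<sigma>\<close> with the transposition of \<open>N - 1\<close> and \<open>N\<close> restores
  monotonicity.\<close>
lemma almost_symmetric_if_corner_at_center:
  assumes "corner t0"
  shows "almost_symmetric e"
proof -
  obtain N where N: "\<tau> (N - 1) = t0" "\<tau> N = t0" "e N \<noteq> e (N - 1)"
    and only: "\<And>i. \<tau> i = t0 \<Longrightarrow> i = N - 1 \<or> i = N"
    using corner_indices[OF assms] by blast
  define sw where "sw x = (if x = N - 1 then N else if x = N then N - 1 else x)" for x :: int
  have sw_sw: "sw (sw x) = x" for x by (simp add: sw_def)
  have \<tau>_sw: "\<tau> (sw x) = \<tau> x" for x using N by (simp add: sw_def)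
  have surj: "surj (\<lambda>x. sw (\<sigma> x))"
    by (rule surjI[of _ "\<lambda>x. \<sigma> (sw x)"]) (simp add: reflected_index_involution sw_sw)
  have dec: "sw (\<sigma> j) < sw (\<sigma> i)" if "i < j" for i j
  proof (cases "\<tau> i < \<tau> j")
    case True
    show ?thesis
    proof (rule ccontr)
      assume "\<not> sw (\<sigma> j) < sw (\<sigma> i)"
      then have "\<tau> (sw (\<sigma> i)) \<le> \<tau> (sw (\<sigma> j))"
        using mono_\<tau> by (simp add: monoD)
      then show False
        using reflected_index(1)[of i] reflected_index(1)[of j] \<tau>_sw True by simp
    qed
  next
    case False
    moreover have "\<tau> i \<le> \<tau> j"
      using mono_\<tau> that by (simp add: monoD)
    ultimately have "\<tau> i = \<tau> j"
      by simp
    moreover from this have "corner (\<tau> i)"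
      using tie_imp_corner that by simp
    ultimately have "\<tau> i = t0" "\<tau> j = t0"
      using corner_at_center by simp_all
    then have "i = N - 1" "j = N"
      using only[of i] only[of j] that by auto
    then show ?thesis
      using reflected_index_fixed N by (simp add: sw_def)
  qed
  have "sw (\<sigma> N) = N - 1"
    using reflected_index_fixed[OF N(2)] by (simp add: sw_def)
  then have "sw (\<sigma> i) = 2 * N - 1 - i" for i
    using decreasing_surj_int[OF surj dec, of N] decreasing_surj_int[OF surj dec, of i] by simp
  then have "\<sigma> (N + int k) = N - int k - 1" if "k \<ge> 1" for k
    using sw_sw[of "\<sigma> (N + int k)"] that by (simp add: sw_def)
  then have "e (N + int k) = e (N - int k - 1)" if "k \<ge> 1" for k
    using reflected_index(2)[of "N + int k"] that by simp
  then show ?thesis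
    unfolding almost_symmetric_def using N(3) by blast
qed

end

end

lemma half_odd_not_int: "x - 1/2 \<in> \<int> \<Longrightarrow> (x :: real) \<notin> \<int>"
proof
  assume "x - 1/2 \<in> \<int>" "x \<in> \<int>"
  from \<open>x \<in> \<int>\<close> this(1) have "x - (x - 1/2) \<in> \<int>" by (rule Ints_diff)
  then obtain k where "1/2 = real_of_int k" by (auto elim: Ints_cases)
  then have "real_of_int (2 * k) = 1" by simp
  then show False by presburger
qed

lemma double_in_Ints_shift:
  fixes x a :: real
  assumes "x - a \<in> \<int>" "2 * a \<in> \<int>"
  shows "2 * x \<in> \<int>"
proof -
  have "2 * x = (x - a) + (x - a) + 2 * a" by simp
  then show ?thesis using assms by (metis Ints_add)
qed

lemma cutting_sequence_weierstrass_symmetry: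
  assumes unif: "unif_distributed \<alpha>" and cut: "cutting_sequence p \<alpha> e" and pass: "passes_through p \<alpha> q"
  shows "q = ptD \<Longrightarrow> even_symmetric e"
    and "q = ptA \<Longrightarrow> almost_symmetric e"
    and "q = ptB \<or> q = ptC \<Longrightarrow> odd_symmetric e"
proof -
  have irr: "\<alpha> \<notin> \<rat>" using unif by (simp add: unif_distributed_def)
  obtain \<tau> where mono: "mono \<tau>" and enum: "bij_betw (\<lambda>i. (\<tau> i, e i)) UNIV (crossing_events p \<alpha>)"
    using cut unfolding cutting_sequence_def by blast
  obtain t0 where t0: "fst p + t0 - fst q \<in> \<int>" "snd p + \<alpha> * t0 - snd q \<in> \<int>"
    using pass unfolding passes_through_def by blast
  note events = H_event_iff[OF irr mono enum] V_event_iff[OF irr mono enum]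
  have center: "2 * (fst p + t0) \<in> \<int>" "2 * (snd p + \<alpha> * t0) \<in> \<int>"
    if "2 * fst q \<in> \<int>" "2 * snd q \<in> \<int>"
    using double_in_Ints_shift t0 that by blast+
  show "even_symmetric e" if "q = ptD"
  proof (rule even_symmetric_if_no_event_at_center[OF irr mono enum])
    show "2 * (fst p + t0) \<in> \<int>" "2 * (snd p + \<alpha> * t0) \<in> \<int>"
      using center that by (simp_all add: ptD_def)
    have "fst p + t0 \<notin> \<int>" "snd p + \<alpha> * t0 \<notin> \<int>"
      using t0 that by (intro half_odd_not_int; simp add: ptD_def)+
    then show "(t0, L) \<notin> crossing_events p \<alpha>" for L
      using events by (cases L) simp_all
  qed
  show "almost_symmetric e" if "q = ptA"
  proof (rule almost_symmetric_if_corner_at_center[OF irr mono enum])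
    show "2 * (fst p + t0) \<in> \<int>" "2 * (snd p + \<alpha> * t0) \<in> \<int>"
      using center that by (simp_all add: ptA_def)
    show "(t0, H) \<in> crossing_events p \<alpha> \<and> (t0, V) \<in> crossing_events p \<alpha>"
      using t0 that events by (simp add: ptA_def)
  qed
  show "odd_symmetric e" if B_or_C: "q = ptB \<or> q = ptC"
  proof -
    have half: "2 * (fst p + t0) \<in> \<int>" "2 * (snd p + \<alpha> * t0) \<in> \<int>"
      using center B_or_C by (auto simp: ptB_def ptC_def)
    show ?thesis
    proof (cases "q = ptB")
      case True
      then have "fst p + t0 \<notin> \<int>"
        using t0 by (intro half_odd_not_int) (simp add: ptB_def)
      then have "(t0, V) \<in> crossing_events p \<alpha>" "(t0, H) \<notin> crossing_events p \<alpha>"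
        using t0 \<open>q = ptB\<close> events by (simp_all add: ptB_def)
      then show ?thesis
        using odd_symmetric_if_single_event_at_center[OF irr mono enum half] by blast
    next
      case False
      then have "q = ptC" using B_or_C by simp
      then have "snd p + \<alpha> * t0 \<notin> \<int>"
        using t0 by (intro half_odd_not_int) (simp add: ptC_def)
      then have "(t0, H) \<in> crossing_events p \<alpha>" "(t0, V) \<notin> crossing_events p \<alpha>"
        using t0 \<open>q = ptC\<close> events by (simp_all add: ptC_def)
      then show ?thesis
        using odd_symmetric_if_single_event_at_center[OF irr mono enum half] by blast
    qed
  qed
qed

section \<open>Classification\<close>

text \<open>Two distinct centres of symmetry generate a translation, which is a period.\<close>
lemma two_reflections_imp_periodic:
  assumes ra: "\<And>n. \<bar>n\<bar> \<ge> K \<Longrightarrow> e (a - n) = e n" and rb: "\<And>n. \<bar>n\<bar> \<ge> K \<Longrightarrow> e (b - n) = e n"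
    and "a \<noteq> b"
  shows "eventually_periodic e"
proof -
  have shift: "e (n + (b - a)) = e n" if "n \<ge> \<bar>K\<bar> + \<bar>a\<bar>" for n
  proof -
    have "\<bar>a - n\<bar> \<ge> K" "\<bar>n\<bar> \<ge> K" using that by auto
    then have "e (b - (a - n)) = e (a - n)" "e (a - n) = e n" using ra rb by auto
    then show ?thesis by (simp add: algebra_simps)
  qed
  show ?thesis
  proof (cases "b - a > 0")
    case True
    then show ?thesis unfolding eventually_periodic_def using shift by blast
  next
    case False
    then have "a - b > 0" using \<open>a \<noteq> b\<close> by simp
    moreover have "e (m + (a - b)) = e m" if "m \<ge> \<bar>K\<bar> + \<bar>a\<bar>" for m
      using shift[of "m + (a - b)"] that \<open>a - b > 0\<close> by simp
    ultimately show ?thesis unfolding eventually_periodic_def by blast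
  qed
qed

lemma symmetry_types_exclusive:
  assumes aper: "\<not> eventually_periodic e"
  shows "\<not> (odd_symmetric e \<and> even_symmetric e)"
    and "\<not> (odd_symmetric e \<and> almost_symmetric e)"
    and "\<not> (even_symmetric e \<and> almost_symmetric e)"
proof -
  have almost_far: "e (2 * N - 1 - n) = e n" if "\<bar>n\<bar> \<ge> \<bar>N\<bar> + 2"
    and "\<forall>n. n \<noteq> N - 1 \<longrightarrow> n \<noteq> N \<longrightarrow> e (2 * N - 1 - n) = e n" for N n
    using that by auto
  show "\<not> (odd_symmetric e \<and> even_symmetric e)"
  proof
    assume "odd_symmetric e \<and> even_symmetric e"
    then obtain N1 N2 where "\<forall>n. e (2 * N1 - n) = e n" "\<forall>n. e (2 * N2 - 1 - n) = e n"
      using odd_symmetric_reflection even_symmetric_reflection by metis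
    moreover have "2 * N1 \<noteq> 2 * N2 - 1" by presburger
    ultimately show False
      using two_reflections_imp_periodic[of 0 e "2 * N1" "2 * N2 - 1"] aper by blast
  qed
  show "\<not> (odd_symmetric e \<and> almost_symmetric e)"
  proof
    assume "odd_symmetric e \<and> almost_symmetric e"
    then obtain N1 N where "\<forall>n. e (2 * N1 - n) = e n"
      "\<forall>n. n \<noteq> N - 1 \<longrightarrow> n \<noteq> N \<longrightarrow> e (2 * N - 1 - n) = e n"
      using odd_symmetric_reflection almost_symmetric_reflection by metis
    moreover have "2 * N1 \<noteq> 2 * N - 1" by presburger
    ultimately show False
      using two_reflections_imp_periodic[of "\<bar>N\<bar> + 2" e "2 * N1" "2 * N - 1"] almost_far aper by blast
  qed
  show "\<not> (even_symmetric e \<and> almost_symmetric e)"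
  proof
    assume "even_symmetric e \<and> almost_symmetric e"
    then obtain N2 N where even: "\<forall>n. e (2 * N2 - 1 - n) = e n"
      and almost: "\<forall>n. n \<noteq> N - 1 \<longrightarrow> n \<noteq> N \<longrightarrow> e (2 * N - 1 - n) = e n" "e N \<noteq> e (N - 1)"
      using even_symmetric_reflection almost_symmetric_reflection by metis
    \<comment> \<open>the two centres cannot coincide, as \<open>e\<close> is not symmetric across the one at \<open>N - 1/2\<close>\<close>
    have "N2 \<noteq> N"
      using even[rule_format, of N] almost(2) by auto
    then show False
      using two_reflections_imp_periodic[of "\<bar>N\<bar> + 2" e "2 * N2 - 1" "2 * N - 1"] even almost_far[OF _ almost(1)]
        aper by auto
  qed
qed

lemma sturmian_weierstrass_classification:
  assumes sturm: "sturmian e" and unif: "unif_distributed \<alpha>" and cut: "cutting_sequence p \<alpha> e"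
    and pass: "passes_through p \<alpha> q" and W: "q \<in> weierstrass_points"
  shows "even_symmetric e \<longleftrightarrow> q = ptD"
    and "almost_symmetric e \<longleftrightarrow> q = ptA"
    and "odd_symmetric e \<longleftrightarrow> q = ptB \<or> q = ptC"
  using cutting_sequence_weierstrass_symmetry[OF unif cut pass]
    symmetry_types_exclusive[OF sturmian_not_eventually_periodic[OF sturm]] W
  unfolding weierstrass_points_def by blast+

theorem lemma4p1:
  fixes \<epsilon> :: "int \<Rightarrow> letter"
  assumes "sturmian \<epsilon>"
  shows "(symmetric \<epsilon> \<longleftrightarrow>
            (\<exists>p \<alpha>. unif_distributed \<alpha> \<and> cutting_sequence p \<alpha> \<epsilon> \<and>
                   (\<exists>q\<in>weierstrass_points. passes_through p \<alpha> q)))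
       \<and> (even_symmetric \<epsilon> \<longleftrightarrow>
            (\<exists>p \<alpha>. unif_distributed \<alpha> \<and> cutting_sequence p \<alpha> \<epsilon> \<and> passes_through p \<alpha> ptD))
       \<and> (almost_symmetric \<epsilon> \<longleftrightarrow>
            (\<exists>p \<alpha>. unif_distributed \<alpha> \<and> cutting_sequence p \<alpha> \<epsilon> \<and> passes_through p \<alpha> ptA))
       \<and> (odd_symmetric \<epsilon> \<longleftrightarrow>
            (\<exists>p \<alpha>. unif_distributed \<alpha> \<and> cutting_sequence p \<alpha> \<epsilon> \<and>
                   (passes_through p \<alpha> ptB \<or> passes_through p \<alpha> ptC)))"
proof -
  note classify = sturmian_weierstrass_classification[OF assms]
  have W: "ptA \<in> weierstrass_points" "ptB \<in> weierstrass_points" "ptC \<in> weierstrass_points"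
    "ptD \<in> weierstrass_points"
    by (simp_all add: weierstrass_points_def)
  have geodesic: "\<exists>p \<alpha> q. unif_distributed \<alpha> \<and> cutting_sequence p \<alpha> \<epsilon> \<and> q \<in> weierstrass_points \<and>
      passes_through p \<alpha> q" if "symmetric \<epsilon>"
    using sturmian_symmetric_passes_weierstrass[OF assms that] by blast
  have even: "even_symmetric \<epsilon> \<longleftrightarrow>
      (\<exists>p \<alpha>. unif_distributed \<alpha> \<and> cutting_sequence p \<alpha> \<epsilon> \<and> passes_through p \<alpha> ptD)"
    using geodesic classify(1) W(4) unfolding symmetric_def by blast
  have almost: "almost_symmetric \<epsilon> \<longleftrightarrow>
      (\<exists>p \<alpha>. unif_distributed \<alpha> \<and> cutting_sequence p \<alpha> \<epsilon> \<and> passes_through p \<alpha> ptA)"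
    using geodesic classify(2) W(1) unfolding symmetric_def by blast
  have odd: "odd_symmetric \<epsilon> \<longleftrightarrow> (\<exists>p \<alpha>. unif_distributed \<alpha> \<and> cutting_sequence p \<alpha> \<epsilon> \<and>
      (passes_through p \<alpha> ptB \<or> passes_through p \<alpha> ptC))"
    using geodesic classify(3) W(2,3) unfolding symmetric_def by blast
  have "symmetric \<epsilon> \<longleftrightarrow>
      (\<exists>p \<alpha>. unif_distributed \<alpha> \<and> cutting_sequence p \<alpha> \<epsilon> \<and> (\<exists>q\<in>weierstrass_points. passes_through p \<alpha> q))"
    using geodesic even almost odd unfolding symmetric_def weierstrass_points_def by blast
  with even almost odd show ?thesis
    by blast
qed

end
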